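(* Consider the signals $u_{MPC}$, $\hat u_{MPC}$, $\alpha_{MPC}$ defined in the context along a trajectory of the closed-loop system. Then for every sampling time $t=\Delta^j$, $j\in\mathbb{N}$, $\hat u_{MPC}(\Delta^j)=\hat u^*(\hat P^{fcst}_j,f(\Delta^j),\omega(\Delta^j),\alpha_{MPC}(\Delta^j))$ is a (globally) Lipschitz function of the sampled state $(f(\Delta^j),\omega(\Delta^j),\alpha_{MPC}(\Delta^j))$ (together with the forecast $\hat P^{fcst}_j$). Additionally, $\alpha_{MPC,i}(t)\hat u_{MPC,i}(t)\leqslant\epsilon_i\alpha_{MPC,i}^2(t)$ for all $t\geqslant0$ and all $i\in\mathcal{I}$.
   Context: Setting: $\mathcal{G}=(\mathcal{I},\mathcal{E})$ is a connected undirected graph with $\mathcal{I}=\{1,\dots,n\}$, $\mathcal{E}=\{e_1,\dots,e_m\}$, fixed orientation and incidence matrix $D\in\mathbb{R}^{m\times n}$; $M=\mathrm{diag}(M_i)$, $E=\mathrm{diag}(E_i)$ with $M_i,E_i>0$; $Y_b\in\mathbb{R}^{m\times m}$ diagonal with positive entries; $\mathcal{I}_\omega\subseteq\mathcal{I}_u\subseteq\mathcal{I}$; $\mathbb{A}=\{y\in\mathbb{R}^n: y_w=0\ \forall w\notin\mathcal{I}_u\}$. The network dynamics are $\dot f=Y_bD\omega$, $M\dot\omega=-E\omega-D^Tf+p(t)+\alpha(t)$ with $\alpha(t)\in\mathbb{A}$. Parameters: $T,\tilde t>0$, $N=\lceil\tilde t/T\rceil$, $c_i,\epsilon_i,T_i>0$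 ($i\in\mathcal{I}_u$), $d>0$, $\underline\omega_i<\bar\omega_i$ ($i\in\mathcal{I}_\omega$). For $\hat P=[\hat p(0),\dots,\hat p(N-1)]\in\mathbb{R}^{n\times N}$, $f_0\in\mathbb{R}^m$, $\omega_0\in\mathbb{R}^n$, $a_0\in\mathbb{A}$, let $\hat u^*(\hat P,f_0,\omega_0,a_0)$ denote the $\hat u$-component of the (unique) optimal solution of the problem: minimize $\sum_{i\in\mathcal{I}_u}c_i\hat u_i^2+d\beta^2$ over $\hat f(k)\in\mathbb{R}^m,\hat\omega(k),\hat\alpha(k)\in\mathbb{R}^n$ ($k=0..N$), $\hat u\in\mathbb{R}^n$, $\beta\in\mathbb{R}$, subject to, for $k=0,\dots,N-1$: $\hat f(k+1)=\hat f(k)+TY_bD\hat\omega(k)$; $M\hat\omega(k+1)=M\hat\omega(k)+T(-E\hat\omega(k)-D^T\hat f(k)+\hat p(k)+\hat u)$; $\hat\alpha_i(k+1)=\hat\alpha_i(k)+T(-\hat\alpha_i(k)/T_i-\hat\omega_i(k)+\hat u_i)$ for $i\in\mathcal{I}_u$; $\hat\alpha_i\equiv0$ for $i\notin\mathcal{I}_u$; $\hat u\in\mathbb{A}$; $\hat f(0)=f_0,\hat\omega(0)=\omega_0,\hat\alpha(0)=a_0$; $\underline\omega_i-\beta\leqslant\hat\omega_i(k+1)\leqslant\bar\omega_i+\beta$ for $i\in\mathcal{I}_\omega$; $|\hat u_i|\leqslant\epsilon_i|a_{0,i}|$ for $i\in\mathcal{I}_u$. Sampling times $0=\Delta^0<\Delta^1<\cdots$;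 at each $\Delta^j$ a piece-wise continuous forecast $p^{fcst}_{\Delta^j}:[\Delta^j,\Delta^j+\tilde t]\to\mathbb{R}^n$ is given and $\hat P^{fcst}_j=[p^{fcst}_{\Delta^j}(\Delta^j+kT)]_{k=0}^{N-1}$. The MPC output is $u_{MPC}(t)=\hat u^*(\hat P^{fcst}_j,f(\Delta^j),\omega(\Delta^j),\alpha_{MPC}(\Delta^j))$ for $t\in[\Delta^j,\Delta^{j+1})$. The stability filter is $\hat u_{MPC,i}(t)=\mathrm{sat}(u_{MPC,i}(t);\epsilon_i|\alpha_{MPC,i}(t)|,-\epsilon_i|\alpha_{MPC,i}(t)|)$, where $\mathrm{sat}(a;b,-b)=\max\{-b,\min\{b,a\}\}$ for $b\geqslant 0$ (with $\epsilon_i$ taken as any positive value, e.g. $1$, for $i\notin\mathcal{I}_u$, where all quantities vanish). The low-pass filter is $\dot\alpha_{MPC,i}=-\alpha_{MPC,i}/T_i-\omega_i+\hat u_{MPC,i}$ for $i\in\mathcal{I}_u$ and $\alpha_{MPC,i}\equiv0$ for $i\notin\mathcal{I}_u$. *)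

theory Defs
  imports "HOL-Analysis.Analysis"
begin

text \<open>Nodes are indexed by a finite type 'n (so n = CARD('n)), edges by a finite type 'm.\<close>

record ('n, 'm) grid =
  Dinc :: "real^'n^'m"
  Mv   :: "real^'n"         \<comment> \<open>diagonal of M\<close>
  Ev   :: "real^'n"         \<comment> \<open>diagonal of E\<close>
  Ybv  :: "real^'m"         \<comment> \<open>diagonal of Y_b\<close>
  Iu   :: "'n set"
  Iw   :: "'n set"

record 'n mpcpar =
  Tstep :: real
  ttil  :: real
  Tf    :: "'n \<Rightarrow> real"
  epsv  :: "'n \<Rightarrow> real"
  cw    :: "'n \<Rightarrow> real"
  dw    :: real
  wlo   :: "'n \<Rightarrow> real"
  whi   :: "'n \<Rightarrow> real"

definition diagm :: "real^'k \<Rightarrow> real^'k^'k" where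
  "diagm v = (\<chi> i j. if i = j then v $ i else 0)"

definition Nh :: "'n mpcpar \<Rightarrow> nat" where
  "Nh P = nat \<lceil>ttil P / Tstep P\<rceil>"

definition Aset :: "('n::finite, 'm::finite) grid \<Rightarrow> (real^'n) set" where
  "Aset G = {y. \<forall>w. w \<notin> Iu G \<longrightarrow> y $ w = 0}"

definition graph_adj :: "real^'n^'m \<Rightarrow> ('n \<times> 'n) set" where
  "graph_adj D = {(i, j). i \<noteq> j \<and> (\<exists>e. D $ e $ i \<noteq> 0 \<and> D $ e $ j \<noteq> 0)}"

definition is_conn_incidence :: "real^'n^'m \<Rightarrow> bool" where
  "is_conn_incidence D \<longleftrightarrow>
     (\<forall>e. \<exists>a b. a \<noteq> b \<and> D $ e $ a = 1 \<and> D $ e $ b = -1 \<and>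
              (\<forall>i. i \<noteq> a \<longrightarrow> i \<noteq> b \<longrightarrow> D $ e $ i = 0)) \<and>
     (\<forall>i j. (i, j) \<in> (graph_adj D)\<^sup>*)"

definition valid_grid :: "('n::finite, 'm::finite) grid \<Rightarrow> bool" where
  "valid_grid G \<longleftrightarrow> is_conn_incidence (Dinc G) \<and>
     (\<forall>i. Mv G $ i > 0) \<and> (\<forall>i. Ev G $ i > 0) \<and> (\<forall>e. Ybv G $ e > 0) \<and>
     Iw G \<subseteq> Iu G"

definition valid_par :: "('n::finite, 'm::finite) grid \<Rightarrow> 'n mpcpar \<Rightarrow> bool" where
  "valid_par G P \<longleftrightarrow> Tstep P > 0 \<and> ttil P > 0 \<and>
     (\<forall>i\<in>Iu G. cw P i > 0 \<and> epsv P i > 0 \<and> Tf P i > 0) \<and>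
     (\<forall>i. epsv P i > 0) \<and> dw P > 0 \<and> (\<forall>i\<in>Iw G. wlo P i < whi P i)"

text \<open>Feasible set of the MPC quadratic program (time indices k = 0..N).
  Phat k is the k-th column of the forecast matrix (k < N).\<close>
definition qp_feas ::
  "('n::finite, 'm::finite) grid \<Rightarrow> 'n mpcpar \<Rightarrow> (nat \<Rightarrow> real^'n) \<Rightarrow> real^'m \<Rightarrow> real^'n \<Rightarrow> real^'n
   \<Rightarrow> (nat \<Rightarrow> real^'m) \<Rightarrow> (nat \<Rightarrow> real^'n) \<Rightarrow> (nat \<Rightarrow> real^'n) \<Rightarrow> real^'n \<Rightarrow> real \<Rightarrow> bool" where
  "qp_feas G P Phat f0 w0 a0 fh wh ah u \<beta> \<longleftrightarrow>
     (\<forall>k < Nh P. fh (Suc k) = fh k + Tstep P *\<^sub>R ((diagm (Ybv G) ** Dinc G) *v wh k)) \<and>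
     (\<forall>k < Nh P. diagm (Mv G) *v wh (Suc k) = diagm (Mv G) *v wh k +
         Tstep P *\<^sub>R (- (diagm (Ev G) *v wh k) - (transpose (Dinc G) *v fh k) + Phat k + u)) \<and>
     (\<forall>k < Nh P. \<forall>i\<in>Iu G. ah (Suc k) $ i =
         ah k $ i + Tstep P * (- ah k $ i / Tf P i - wh k $ i + u $ i)) \<and>
     (\<forall>k \<le> Nh P. \<forall>i. i \<notin> Iu G \<longrightarrow> ah k $ i = 0) \<and>
     u \<in> Aset G \<and>
     fh 0 = f0 \<and> wh 0 = w0 \<and> ah 0 = a0 \<and>
     (\<forall>k < Nh P. \<forall>i\<in>Iw G. wlo P i - \<beta> \<le> wh (Suc k) $ i \<and> wh (Suc k) $ i \<le> whi P i + \<beta>) \<and>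
     (\<forall>i\<in>Iu G. \<bar>u $ i\<bar> \<le> epsv P i * \<bar>a0 $ i\<bar>)"

definition qp_cost :: "('n::finite, 'm::finite) grid \<Rightarrow> 'n mpcpar \<Rightarrow> real^'n \<Rightarrow> real \<Rightarrow> real" where
  "qp_cost G P u \<beta> = (\<Sum>i\<in>Iu G. cw P i * (u $ i)\<^sup>2) + dw P * \<beta>\<^sup>2"

definition qp_opt ::
  "('n::finite, 'm::finite) grid \<Rightarrow> 'n mpcpar \<Rightarrow> (nat \<Rightarrow> real^'n) \<Rightarrow> real^'m \<Rightarrow> real^'n \<Rightarrow> real^'n
   \<Rightarrow> (nat \<Rightarrow> real^'m) \<Rightarrow> (nat \<Rightarrow> real^'n) \<Rightarrow> (nat \<Rightarrow> real^'n) \<Rightarrow> real^'n \<Rightarrow> real \<Rightarrow> bool" where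
  "qp_opt G P Phat f0 w0 a0 fh wh ah u \<beta> \<longleftrightarrow>
     qp_feas G P Phat f0 w0 a0 fh wh ah u \<beta> \<and>
     (\<forall>fh' wh' ah' u' \<beta>'. qp_feas G P Phat f0 w0 a0 fh' wh' ah' u' \<beta>' \<longrightarrow>
        qp_cost G P u \<beta> \<le> qp_cost G P u' \<beta>')"

definition uopt ::
  "('n::finite, 'm::finite) grid \<Rightarrow> 'n mpcpar \<Rightarrow> (nat \<Rightarrow> real^'n) \<Rightarrow> real^'m \<Rightarrow> real^'n \<Rightarrow> real^'n \<Rightarrow> real^'n" where
  "uopt G P Phat f0 w0 a0 = (THE u. \<exists>fh wh ah \<beta>. qp_opt G P Phat f0 w0 a0 fh wh ah u \<beta>)"

definition sat :: "real \<Rightarrow> real \<Rightarrow> real" where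
  "sat a b = max (- b) (min b a)"

definition seg :: "(nat \<Rightarrow> real) \<Rightarrow> real \<Rightarrow> nat" where
  "seg \<Delta> t = (THE j. \<Delta> j \<le> t \<and> t < \<Delta> (Suc j))"

definition Pfcst :: "'n mpcpar \<Rightarrow> (nat \<Rightarrow> real) \<Rightarrow> (nat \<Rightarrow> real \<Rightarrow> real^'n) \<Rightarrow> nat \<Rightarrow> nat \<Rightarrow> real^'n" where
  "Pfcst P \<Delta> pf j = (\<lambda>k. pf j (\<Delta> j + real k * Tstep P))"

definition u_mpc ::
  "('n::finite, 'm::finite) grid \<Rightarrow> 'n mpcpar \<Rightarrow> (nat \<Rightarrow> real) \<Rightarrow> (nat \<Rightarrow> real \<Rightarrow> real^'n)
   \<Rightarrow> (real \<Rightarrow> real^'m) \<Rightarrow> (real \<Rightarrow> real^'n) \<Rightarrow> (real \<Rightarrow> real^'n) \<Rightarrow> real \<Rightarrow> real^'n" where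
  "u_mpc G P \<Delta> pf f \<omega> \<alpha> t =
     (let j = seg \<Delta> t in uopt G P (Pfcst P \<Delta> pf j) (f (\<Delta> j)) (\<omega> (\<Delta> j)) (\<alpha> (\<Delta> j)))"

definition uhat_mpc ::
  "('n::finite, 'm::finite) grid \<Rightarrow> 'n mpcpar \<Rightarrow> (nat \<Rightarrow> real) \<Rightarrow> (nat \<Rightarrow> real \<Rightarrow> real^'n)
   \<Rightarrow> (real \<Rightarrow> real^'m) \<Rightarrow> (real \<Rightarrow> real^'n) \<Rightarrow> (real \<Rightarrow> real^'n) \<Rightarrow> real \<Rightarrow> real^'n" where
  "uhat_mpc G P \<Delta> pf f \<omega> \<alpha> t =
     (\<chi> i. sat (u_mpc G P \<Delta> pf f \<omega> \<alpha> t $ i) (epsv P i * \<bar>\<alpha> t $ i\<bar>))"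

text \<open>Closed-loop trajectory: network dynamics driven by alpha = alpha_MPC, low-pass filter
  driven by the stability-filtered MPC output.\<close>
definition closed_loop ::
  "('n::finite, 'm::finite) grid \<Rightarrow> 'n mpcpar \<Rightarrow> (nat \<Rightarrow> real) \<Rightarrow> (nat \<Rightarrow> real \<Rightarrow> real^'n)
   \<Rightarrow> (real \<Rightarrow> real^'n) \<Rightarrow> (real \<Rightarrow> real^'m) \<Rightarrow> (real \<Rightarrow> real^'n) \<Rightarrow> (real \<Rightarrow> real^'n) \<Rightarrow> bool" where
  "closed_loop G P \<Delta> pf p f \<omega> \<alpha> \<longleftrightarrow>
     continuous_on {0..} f \<and> continuous_on {0..} \<omega> \<and> continuous_on {0..} \<alpha> \<and>
     (\<forall>t\<ge>0. \<alpha> t \<in> Aset G) \<and>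
     (\<forall>t>0. t \<notin> range \<Delta> \<longrightarrow>
        (f has_vector_derivative ((diagm (Ybv G) ** Dinc G) *v \<omega> t)) (at t) \<and>
        (\<exists>w'. (\<omega> has_vector_derivative w') (at t) \<and>
              diagm (Mv G) *v w' = - (diagm (Ev G) *v \<omega> t) - (transpose (Dinc G) *v f t) + p t + \<alpha> t) \<and>
        (\<forall>i\<in>Iu G. ((\<lambda>s. \<alpha> s $ i) has_real_derivative
            (- \<alpha> t $ i / Tf P i - \<omega> t $ i + uhat_mpc G P \<Delta> pf f \<omega> \<alpha> t $ i)) (at t)))"

end

theory Submission
  imports Defs
begin

(* The change of variables z = (sqrt c_i * u_i, sqrt d * beta) turns the MPC problem into finding
   the minimum-norm point of a polyhedron {z. g_j z <= b_j}. The linear forms g_j (input bounds,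
   and frequency bounds along the linear discrete-time network response) are fixed; only the
   right-hand side b depends on the data, and it does so Lipschitz continuously.

   The minimum-norm point of a polyhedron is a Lipschitz function of b. Along a segment b_t it is
   continuous, and near each t it equals the minimum-norm point of the affine set cut out by one of
   finitely many sets of active constraints. Each of these affine minimum-norm points is Lipschitz
   in b, because the difference of two of them is orthogonal to the common kernel of the active
   forms; the local bounds then glue along the segment.

   The input bound |u_i| <= eps_i |alpha_i| is part of the problem, so the stability filter is
   inactive at sampling times, and the filter itself yields alpha_i u_i <= eps_i alpha_i^2. *)

section \<open>Minimum-norm points of polyhedra\<close>

lemma closest_point_zero_dot:
  assumes "convex S" "closed S" "y \<in> S"
  shows "0 \<le> inner (closest_point S 0) (y - closest_point S 0)"
  using closest_point_dot[OF assms, of 0] by simp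

lemma norm_closest_point_zero_le:
  assumes "closed S" "y \<in> S"
  shows "norm (closest_point S 0) \<le> norm y"
  using closest_point_le[OF assms, of 0] by simp

lemma closest_point_zero_unique:
  assumes "convex S" "closed S" "y \<in> S" "norm y \<le> norm (closest_point S 0)"
  shows "y = closest_point S 0"
  using assms norm_closest_point_zero_le[OF assms(2)]
  by (intro closest_point_unique) (auto simp: dist_norm intro: order_trans)

lemma closest_point_zero_orthogonal:
  assumes "convex S" "closed S" and "\<And>c. closest_point S 0 + c *\<^sub>R v \<in> S"
  shows "inner (closest_point S 0) v = 0"
  using closest_point_zero_dot[OF assms(1,2) assms(3)[of 1]]
    closest_point_zero_dot[OF assms(1,2) assms(3)[of "-1"]]
  by simp

lemma closest_point_zero_dist_sq_le:
  assumes "convex S" "closed S" "convex S'" "closed S'" "y \<in> S'" "y' \<in> S"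
  defines "x \<equiv> closest_point S 0" and "x' \<equiv> closest_point S' 0"
  shows "(norm (x - x'))\<^sup>2 \<le> norm x * norm (y' - x') + norm x' * norm (y - x)"
proof -
  have "0 \<le> inner x (y' - x)" "0 \<le> inner x' (y - x')"
    unfolding x_def x'_def using closest_point_zero_dot assms(1-6) by blast+
  moreover have "(norm (x - x'))\<^sup>2 = inner x (x - y') + inner x (y' - x') + (inner x' (x' - y) + inner x' (y - x))"
    by (simp add: power2_norm_eq_inner inner_diff_left inner_diff_right inner_commute algebra_simps)
  ultimately have "(norm (x - x'))\<^sup>2 \<le> inner x (y' - x') + inner x' (y - x)"
    by (simp add: inner_diff_right)
  also have "\<dots> \<le> norm x * norm (y' - x') + norm x' * norm (y - x)"
    by (intro add_mono norm_cauchy_schwarz)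
  finally show ?thesis .
qed

lemma unit_interval_convex_comb:
  fixes a b \<mu> :: real
  shows "a \<in> {0..1} \<Longrightarrow> b \<in> {0..1} \<Longrightarrow> \<mu> \<in> {0..1} \<Longrightarrow> (1 - \<mu>) * a + \<mu> * b \<in> {0..1}"
  using convexD_alt[of "{0..1::real}" a b \<mu>] by simp

lemma compact_pos_bounded_below:
  fixes h :: "'b::topological_space \<Rightarrow> real"
  assumes "compact S" "continuous_on S h" "\<And>y. y \<in> S \<Longrightarrow> 0 < h y"
  shows "\<exists>\<sigma>>0. \<forall>y\<in>S. \<sigma> \<le> h y"
proof (cases "S = {}")
  case False
  then obtain y0 where "y0 \<in> S" "\<forall>y\<in>S. h y0 \<le> h y"
    using continuous_attains_inf[OF assms(1) _ assms(2)] by blast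
  then show ?thesis using assms(3) by blast
qed (auto intro: zero_less_one)

locale linear_constraints =
  fixes J :: "'j set" and g :: "'j \<Rightarrow> 'a::euclidean_space \<Rightarrow> real"
  assumes finite_J: "finite J" and linear_g: "\<And>j. j \<in> J \<Longrightarrow> linear (g j)"
begin

definition polyhedron :: "('j \<Rightarrow> real) \<Rightarrow> 'a set" where
  "polyhedron b = {z. \<forall>j\<in>J. g j z \<le> b j}"

definition equality_set :: "'j set \<Rightarrow> ('j \<Rightarrow> real) \<Rightarrow> 'a set" where
  "equality_set E b = {z. \<forall>j\<in>E. g j z = b j}"

definition min_norm :: "('j \<Rightarrow> real) \<Rightarrow> 'a" where
  "min_norm b = closest_point (polyhedron b) 0"

definition min_norm_eq :: "'j set \<Rightarrow> ('j \<Rightarrow> real) \<Rightarrow> 'a" where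
  "min_norm_eq E b = closest_point (equality_set E b) 0"

definition active :: "('j \<Rightarrow> real) \<Rightarrow> 'j set" where
  "active b = {j\<in>J. g j (min_norm b) = b j}"

definition kernel_of :: "'j set \<Rightarrow> 'a set" where
  "kernel_of E = {v. \<forall>j\<in>E. g j v = 0}"

lemma bounded_linear_g: "j \<in> J \<Longrightarrow> bounded_linear (g j)"
  using linear_g linear_conv_bounded_linear by blast

lemma continuous_on_g: "j \<in> J \<Longrightarrow> continuous_on S (g j)"
  using bounded_linear_g linear_continuous_on by blast

lemma closed_polyhedron: "closed (polyhedron b)"
proof -
  have "polyhedron b = (\<Inter>j\<in>J. {z. g j z \<le> b j})"
    unfolding polyhedron_def by auto
  then show ?thesis
    by (auto intro!: closed_INT closed_Collect_le continuous_on_g)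
qed

lemma convex_polyhedron: "convex (polyhedron b)"
proof -
  have "polyhedron b = (\<Inter>j\<in>J. g j -` {..b j})"
    unfolding polyhedron_def by auto
  then show ?thesis
    by (auto intro!: convex_INT convex_linear_vimage linear_g)
qed

lemma closed_equality_set: "E \<subseteq> J \<Longrightarrow> closed (equality_set E b)"
proof -
  assume "E \<subseteq> J"
  moreover have "equality_set E b = (\<Inter>j\<in>E. {z. g j z = b j})"
    unfolding equality_set_def by auto
  ultimately show ?thesis
    by (auto intro!: closed_INT closed_Collect_eq continuous_on_g)
qed

lemma convex_equality_set: "E \<subseteq> J \<Longrightarrow> convex (equality_set E b)"
proof -
  assume "E \<subseteq> J"
  moreover have "equality_set E b = (\<Inter>j\<in>E. g j -` {b j})"
    unfolding equality_set_def by auto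
  ultimately show ?thesis
    by (auto intro!: convex_INT convex_linear_vimage linear_g)
qed

lemma min_norm_in_polyhedron: "polyhedron b \<noteq> {} \<Longrightarrow> min_norm b \<in> polyhedron b"
  unfolding min_norm_def using closest_point_in_set closed_polyhedron by blast

lemma min_norm_dot: "y \<in> polyhedron b \<Longrightarrow> 0 \<le> inner (min_norm b) (y - min_norm b)"
  unfolding min_norm_def by (rule closest_point_zero_dot[OF convex_polyhedron closed_polyhedron])

lemma norm_min_norm_le: "y \<in> polyhedron b \<Longrightarrow> norm (min_norm b) \<le> norm y"
  unfolding min_norm_def by (rule norm_closest_point_zero_le[OF closed_polyhedron])

lemma min_norm_unique: "y \<in> polyhedron b \<Longrightarrow> norm y \<le> norm (min_norm b) \<Longrightarrow> y = min_norm b"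
  unfolding min_norm_def by (rule closest_point_zero_unique[OF convex_polyhedron closed_polyhedron])

lemma min_norm_eq_in:
  "E \<subseteq> J \<Longrightarrow> equality_set E b \<noteq> {} \<Longrightarrow> min_norm_eq E b \<in> equality_set E b"
  unfolding min_norm_eq_def using closest_point_in_set closed_equality_set by blast

lemma orthogonal_kernel_sphere_bound:
  assumes "E \<subseteq> J"
  shows "\<exists>\<sigma>>0. \<forall>y. (\<forall>v\<in>kernel_of E. inner y v = 0) \<longrightarrow> norm y = 1 \<longrightarrow> \<sigma> \<le> (\<Sum>j\<in>E. \<bar>g j y\<bar>)"
proof -
  define S where "S = {y. \<forall>v\<in>kernel_of E. inner y v = 0} \<inter> sphere 0 1"
  have "{y. \<forall>v\<in>kernel_of E. inner y v = 0} = (\<Inter>v\<in>kernel_of E. {y. inner y v = 0})"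
    by auto
  then have "compact S"
    unfolding S_def by (auto intro!: closed_Int_compact closed_INT closed_Collect_eq continuous_intros)
  moreover have "continuous_on S (\<lambda>y. \<Sum>j\<in>E. \<bar>g j y\<bar>)"
    using assms by (intro continuous_on_sum continuous_on_rabs continuous_on_g) auto
  moreover have "0 < (\<Sum>j\<in>E. \<bar>g j y\<bar>)" if y: "y \<in> S" for y
  proof (rule ccontr)
    assume "\<not> 0 < (\<Sum>j\<in>E. \<bar>g j y\<bar>)"
    then have "(\<Sum>j\<in>E. \<bar>g j y\<bar>) = 0"
      by (simp add: order.antisym not_less sum_nonneg)
    then have "y \<in> kernel_of E"
      unfolding kernel_of_def using finite_subset[OF assms finite_J] by (simp add: sum_nonneg_eq_0_iff)
    then have "inner y y = 0" using y unfolding S_def by blast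
    then show False using y unfolding S_def by simp
  qed
  ultimately obtain \<sigma> where "\<sigma> > 0" "\<forall>y\<in>S. \<sigma> \<le> (\<Sum>j\<in>E. \<bar>g j y\<bar>)"
    using compact_pos_bounded_below by blast
  then show ?thesis unfolding S_def by auto
qed

lemma orthogonal_kernel_bounded_below:
  assumes E: "E \<subseteq> J"
  shows "\<exists>\<sigma>>0. \<forall>y. (\<forall>v\<in>kernel_of E. inner y v = 0) \<longrightarrow> \<sigma> * norm y \<le> (\<Sum>j\<in>E. \<bar>g j y\<bar>)"
proof -
  obtain \<sigma> where \<sigma>: "\<sigma> > 0"
    "\<And>y. \<forall>v\<in>kernel_of E. inner y v = 0 \<Longrightarrow> norm y = 1 \<Longrightarrow> \<sigma> \<le> (\<Sum>j\<in>E. \<bar>g j y\<bar>)"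
    using orthogonal_kernel_sphere_bound[OF E] by blast
  have "\<sigma> * norm y \<le> (\<Sum>j\<in>E. \<bar>g j y\<bar>)" if y: "\<forall>v\<in>kernel_of E. inner y v = 0" for y
  proof (cases "y = 0")
    case True
    then show ?thesis using E linear_g by (simp add: linear_0 subset_iff)
  next
    case False
    have "\<sigma> \<le> (\<Sum>j\<in>E. \<bar>g j ((1 / norm y) *\<^sub>R y)\<bar>)"
      using y False by (intro \<sigma>(2)) auto
    also have "\<dots> = (\<Sum>j\<in>E. \<bar>g j y\<bar>) / norm y"
      using E linear_g by (simp add: linear_scale abs_mult sum_divide_distrib subset_iff)
    finally show ?thesis using False by (simp add: field_simps)
  qed
  then show ?thesis using \<sigma>(1) by blast
qed

lemma min_norm_eq_diff_orthogonal:
  assumes E: "E \<subseteq> J" and ne: "equality_set E b \<noteq> {}" "equality_set E b' \<noteq> {}"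
    and v: "v \<in> kernel_of E"
  shows "inner (min_norm_eq E b - min_norm_eq E b') v = 0"
proof -
  have "inner (min_norm_eq E c) v = 0" if "equality_set E c \<noteq> {}" for c
    unfolding min_norm_eq_def
  proof (rule closest_point_zero_orthogonal[OF convex_equality_set[OF E] closed_equality_set[OF E]])
    fix r
    have "g j (min_norm_eq E c + r *\<^sub>R v) = c j" if "j \<in> E" for j
      using min_norm_eq_in[OF E \<open>equality_set E c \<noteq> {}\<close>] that v E linear_g[of j]
      by (simp add: equality_set_def kernel_of_def linear_add linear_scale subset_iff)
    then show "closest_point (equality_set E c) 0 + r *\<^sub>R v \<in> equality_set E c"
      unfolding equality_set_def min_norm_eq_def by blast
  qed
  then show ?thesis using ne by (simp add: inner_diff_left)
qed

lemma min_norm_eq_lipschitz: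
  "\<exists>L\<ge>0. \<forall>E b b'. E \<subseteq> J \<longrightarrow> equality_set E b \<noteq> {} \<longrightarrow> equality_set E b' \<noteq> {} \<longrightarrow>
      norm (min_norm_eq E b - min_norm_eq E b') \<le> L * (\<Sum>j\<in>J. \<bar>b j - b' j\<bar>)"
proof -
  have "\<forall>E\<in>Pow J. \<exists>\<sigma>>0. \<forall>y. (\<forall>v\<in>kernel_of E. inner y v = 0)
      \<longrightarrow> \<sigma> * norm y \<le> (\<Sum>j\<in>E. \<bar>g j y\<bar>)"
    using orthogonal_kernel_bounded_below by blast
  from bchoice[OF this] obtain \<sigma> where \<sigma>: "\<forall>E\<in>Pow J. \<sigma> E > 0 \<and>
      (\<forall>y. (\<forall>v\<in>kernel_of E. inner y v = 0) \<longrightarrow> \<sigma> E * norm y \<le> (\<Sum>j\<in>E. \<bar>g j y\<bar>))"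
    by (elim exE)
  define L where "L = (\<Sum>E\<in>Pow J. 1 / \<sigma> E)"
  have L_ge: "1 / \<sigma> E \<le> L" if "E \<subseteq> J" for E
    unfolding L_def using finite_J \<sigma> that by (intro member_le_sum) (auto intro: less_imp_le)
  have "norm (min_norm_eq E b - min_norm_eq E b') \<le> L * (\<Sum>j\<in>J. \<bar>b j - b' j\<bar>)"
    if E: "E \<subseteq> J" and ne: "equality_set E b \<noteq> {}" "equality_set E b' \<noteq> {}" for E b b'
  proof -
    let ?y = "min_norm_eq E b - min_norm_eq E b'"
    have \<sigma>E: "\<sigma> E > 0" "\<sigma> E * norm ?y \<le> (\<Sum>j\<in>E. \<bar>g j ?y\<bar>)"
      using \<sigma> E min_norm_eq_diff_orthogonal[OF E ne] by blast+
    have "g j ?y = b j - b' j" if "j \<in> E" for j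
      using min_norm_eq_in[OF E ne(1)] min_norm_eq_in[OF E ne(2)] that E linear_g[of j]
      by (simp add: equality_set_def linear_diff subset_iff)
    then have "(\<Sum>j\<in>E. \<bar>g j ?y\<bar>) = (\<Sum>j\<in>E. \<bar>b j - b' j\<bar>)"
      by (intro sum.cong) auto
    also have "\<dots> \<le> (\<Sum>j\<in>J. \<bar>b j - b' j\<bar>)"
      using E finite_J by (intro sum_mono2) auto
    finally have "norm ?y \<le> 1 / \<sigma> E * (\<Sum>j\<in>J. \<bar>b j - b' j\<bar>)"
      using \<sigma>E by (simp add: field_simps)
    also have "\<dots> \<le> L * (\<Sum>j\<in>J. \<bar>b j - b' j\<bar>)"
      using L_ge[OF E] by (intro mult_right_mono) (auto simp: sum_nonneg)
    finally show ?thesis .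
  qed
  moreover have "0 \<le> L"
    using L_ge[of "{}"] \<sigma> by (meson Pow_bottom empty_subsetI less_imp_le order.trans zero_le_divide_1_iff)
  ultimately show ?thesis by blast
qed

lemma eventually_in_polyhedron:
  assumes ne: "polyhedron b \<noteq> {}" and y: "y \<in> equality_set (active b) b"
  shows "eventually (\<lambda>\<epsilon>. min_norm b + \<epsilon> *\<^sub>R (y - min_norm b) \<in> polyhedron b) (at_right 0)"
proof -
  let ?x = "min_norm b"
  have g_step: "g j (?x + \<epsilon> *\<^sub>R (y - ?x)) = g j ?x + \<epsilon> * (g j y - g j ?x)" if "j \<in> J" for j \<epsilon>
    using linear_g[OF that] by (simp add: linear_add linear_scale linear_diff)
  have "eventually (\<lambda>\<epsilon>. g j ?x + \<epsilon> * (g j y - g j ?x) < b j) (at_right 0)"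
    if "j \<in> J - active b" for j
  proof -
    have "g j ?x < b j"
      using that min_norm_in_polyhedron[OF ne] unfolding polyhedron_def active_def by force
    moreover have "((\<lambda>\<epsilon>. g j ?x + \<epsilon> * (g j y - g j ?x)) \<longlongrightarrow> g j ?x) (at_right 0)"
      by (auto intro!: tendsto_eq_intros)
    ultimately show ?thesis
      by (rule order_tendstoD(2)[rotated])
  qed
  then have "eventually (\<lambda>\<epsilon>. \<forall>j\<in>J - active b. g j ?x + \<epsilon> * (g j y - g j ?x) < b j) (at_right 0)"
    using finite_J by (simp add: eventually_ball_finite_distrib)
  then show ?thesis
  proof (rule eventually_mono)
    fix \<epsilon> assume inactive: "\<forall>j\<in>J - active b. g j ?x + \<epsilon> * (g j y - g j ?x) < b j"
    have "g j (?x + \<epsilon> *\<^sub>R (y - ?x)) \<le> b j" if "j \<in> J" for j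
    proof (cases "j \<in> active b")
      case True
      then show ?thesis using y g_step[OF that] unfolding equality_set_def active_def by simp
    next
      case False
      then show ?thesis using inactive g_step[OF that] that by force
    qed
    then show "?x + \<epsilon> *\<^sub>R (y - ?x) \<in> polyhedron b"
      unfolding polyhedron_def by blast
  qed
qed

lemma min_norm_eq_active:
  assumes ne: "polyhedron b \<noteq> {}"
  shows "min_norm b = min_norm_eq (active b) b"
proof -
  let ?x = "min_norm b" and ?E = "active b"
  have E: "?E \<subseteq> J" unfolding active_def by auto
  have x: "?x \<in> equality_set ?E b" unfolding equality_set_def active_def by auto
  have "norm ?x \<le> norm y" if y: "y \<in> equality_set ?E b" for y
  proof -
    obtain \<epsilon> :: real where "0 < \<epsilon>" and "?x + \<epsilon> *\<^sub>R (y - ?x) \<in> polyhedron b"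
      using eventually_in_polyhedron[OF ne y] eventually_at_right_less[of 0]
      by (metis (mono_tags, lifting) eventually_conj eventually_happens' trivial_limit_at_right_real)
    then have "0 \<le> \<epsilon> * inner ?x (y - ?x)"
      using min_norm_dot by fastforce
    then have "inner ?x ?x \<le> inner ?x y"
      using \<open>0 < \<epsilon>\<close> by (simp add: zero_le_mult_iff inner_diff_right)
    also have "\<dots> \<le> norm ?x * norm y"
      by (rule norm_cauchy_schwarz)
    finally have "norm ?x * norm ?x \<le> norm ?x * norm y"
      by (simp add: power2_norm_eq_inner[symmetric] power2_eq_square)
    then show ?thesis
      by (smt (verit) mult_le_cancel_left norm_ge_zero)
  qed
  then have "norm ?x \<le> norm (min_norm_eq ?E b)"
    using min_norm_eq_in[OF E] x by blast
  then show ?thesis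
    unfolding min_norm_eq_def
    by (rule closest_point_zero_unique[OF convex_equality_set[OF E] closed_equality_set[OF E] x])
qed

lemma polyhedron_limit:
  assumes F: "F \<noteq> bot" and z: "(z \<longlongrightarrow> y) F" and c: "\<And>j. ((\<lambda>s. c s j) \<longlongrightarrow> b j) F"
    and ev: "eventually (\<lambda>s. z s \<in> polyhedron (c s)) F"
  shows "y \<in> polyhedron b"
  unfolding polyhedron_def
proof (intro CollectI ballI)
  fix j assume j: "j \<in> J"
  have "((\<lambda>s. g j (z s)) \<longlongrightarrow> g j y) F"
    by (rule bounded_linear.tendsto[OF bounded_linear_g[OF j] z])
  moreover have "eventually (\<lambda>s. g j (z s) \<le> c s j) F"
    using ev by (rule eventually_mono) (use j in \<open>auto simp: polyhedron_def\<close>)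
  ultimately show "g j y \<le> b j"
    using F c[of j] by (simp add: tendsto_le)
qed

lemma polyhedron_convex_comb:
  assumes "z1 \<in> polyhedron c1" "z2 \<in> polyhedron c2" "0 \<le> \<mu>" "\<mu> \<le> 1"
  shows "(1 - \<mu>) *\<^sub>R z1 + \<mu> *\<^sub>R z2 \<in> polyhedron (\<lambda>j. (1 - \<mu>) * c1 j + \<mu> * c2 j)"
  unfolding polyhedron_def
proof (intro CollectI ballI)
  fix j assume j: "j \<in> J"
  have "g j z1 \<le> c1 j" "g j z2 \<le> c2 j" using assms j unfolding polyhedron_def by auto
  then have "(1 - \<mu>) * g j z1 + \<mu> * g j z2 \<le> (1 - \<mu>) * c1 j + \<mu> * c2 j"
    using assms by (intro add_mono mult_left_mono) auto
  then show "g j ((1 - \<mu>) *\<^sub>R z1 + \<mu> *\<^sub>R z2) \<le> (1 - \<mu>) * c1 j + \<mu> * c2 j"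
    using linear_g[OF j] by (simp add: linear_add linear_scale)
qed

context
  fixes b0 b1 :: "'j \<Rightarrow> real" and L :: real
  assumes feasible0: "polyhedron b0 \<noteq> {}" and feasible1: "polyhedron b1 \<noteq> {}"
    and L_nonneg: "0 \<le> L"
    and min_norm_eq_lip: "\<And>E b b'. E \<subseteq> J \<Longrightarrow> equality_set E b \<noteq> {} \<Longrightarrow> equality_set E b' \<noteq> {} \<Longrightarrow>
        norm (min_norm_eq E b - min_norm_eq E b') \<le> L * (\<Sum>j\<in>J. \<bar>b j - b' j\<bar>)"
begin

definition b_seg :: "real \<Rightarrow> 'j \<Rightarrow> real" where
  "b_seg t = (\<lambda>j. (1 - t) * b0 j + t * b1 j)"

definition x_seg :: "real \<Rightarrow> 'a" where
  "x_seg t = min_norm (b_seg t)"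

lemma b_seg_0: "b_seg 0 = b0" and b_seg_1: "b_seg 1 = b1"
  unfolding b_seg_def by auto

lemma b_seg_dist: "(\<Sum>j\<in>J. \<bar>b_seg s j - b_seg t j\<bar>) = \<bar>s - t\<bar> * (\<Sum>j\<in>J. \<bar>b1 j - b0 j\<bar>)"
proof -
  have "b_seg s j - b_seg t j = (s - t) * (b1 j - b0 j)" for j
    unfolding b_seg_def by (simp add: algebra_simps)
  then show ?thesis by (simp add: abs_mult sum_distrib_left)
qed

lemma interp_in_polyhedron:
  "t \<in> {0..1} \<Longrightarrow> (1 - t) *\<^sub>R min_norm b0 + t *\<^sub>R min_norm b1 \<in> polyhedron (b_seg t)"
  unfolding b_seg_def
  by (rule polyhedron_convex_comb[OF min_norm_in_polyhedron[OF feasible0] min_norm_in_polyhedron[OF feasible1]]) auto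

lemma feasible_seg: "t \<in> {0..1} \<Longrightarrow> polyhedron (b_seg t) \<noteq> {}"
  using interp_in_polyhedron by blast

lemma x_seg_in_polyhedron: "t \<in> {0..1} \<Longrightarrow> x_seg t \<in> polyhedron (b_seg t)"
  unfolding x_seg_def by (rule min_norm_in_polyhedron[OF feasible_seg])

lemma norm_x_seg_le:
  assumes "t \<in> {0..1}"
  shows "norm (x_seg t) \<le> (1 - t) * norm (min_norm b0) + t * norm (min_norm b1)"
proof -
  have "norm (x_seg t) \<le> norm ((1 - t) *\<^sub>R min_norm b0 + t *\<^sub>R min_norm b1)"
    unfolding x_seg_def by (rule norm_min_norm_le[OF interp_in_polyhedron[OF assms]])
  also have "\<dots> \<le> (1 - t) * norm (min_norm b0) + t * norm (min_norm b1)"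
    using assms norm_triangle_ineq[of "(1 - t) *\<^sub>R min_norm b0" "t *\<^sub>R min_norm b1"] by simp
  finally show ?thesis .
qed

lemma norm_x_seg_le_sum:
  "t \<in> {0..1} \<Longrightarrow> norm (x_seg t) \<le> norm (min_norm b0) + norm (min_norm b1)"
  using norm_x_seg_le[of t] unit_interval_convex_comb[of 1 0 t]
  by (smt (verit, best) atLeastAtMost_iff mult_left_le_one_le norm_ge_zero)

lemma x_seg_convex_comb:
  assumes "t \<in> {0..1}" "e \<in> {0..1}" "\<mu> \<in> {0..1}"
  shows "(1 - \<mu>) *\<^sub>R x_seg t + \<mu> *\<^sub>R x_seg e \<in> polyhedron (b_seg ((1 - \<mu>) * t + \<mu> * e))"
proof -
  have "b_seg ((1 - \<mu>) * t + \<mu> * e) = (\<lambda>j. (1 - \<mu>) * b_seg t j + \<mu> * b_seg e j)"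
    unfolding b_seg_def by (auto simp: algebra_simps)
  then show ?thesis
    using polyhedron_convex_comb[OF x_seg_in_polyhedron x_seg_in_polyhedron] assms by auto
qed

lemma x_seg_dist_sq_le:
  assumes t01: "t \<in> {0..1}" and e: "e \<in> {0, 1}" "e' \<in> {0, 1}" and \<mu>: "\<mu> \<in> {0..1}" and \<kappa>: "\<kappa> \<in> {0..1}"
    and s: "s = (1 - \<mu>) * t + \<mu> * e" and t: "t = (1 - \<kappa>) * s + \<kappa> * e'"
  shows "(norm (x_seg s - x_seg t))\<^sup>2 \<le> 2 * (norm (min_norm b0) + norm (min_norm b1))\<^sup>2 * (\<mu> + \<kappa>)"
proof -
  define R where "R = norm (min_norm b0) + norm (min_norm b1)"
  have e01: "e \<in> {0..1}" "e' \<in> {0..1}" using e by auto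
  have s01: "s \<in> {0..1}" unfolding s by (rule unit_interval_convex_comb[OF t01 e01(1) \<mu>])
  have R: "norm (x_seg u) \<le> R" if "u \<in> {0..1}" for u
    unfolding R_def using norm_x_seg_le_sum[OF that] .
  have R2: "norm (x_seg u - x_seg v) \<le> 2 * R" if "u \<in> {0..1}" "v \<in> {0..1}" for u v
    using R[OF that(1)] R[OF that(2)] norm_triangle_ineq4[of "x_seg u" "x_seg v"] by simp
  have y': "(1 - \<mu>) *\<^sub>R x_seg t + \<mu> *\<^sub>R x_seg e \<in> polyhedron (b_seg s)"
    unfolding s by (rule x_seg_convex_comb[OF t01 e01(1) \<mu>])
  have y: "(1 - \<kappa>) *\<^sub>R x_seg s + \<kappa> *\<^sub>R x_seg e' \<in> polyhedron (b_seg t)"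
    using x_seg_convex_comb[OF s01 e01(2) \<kappa>] t by simp
  have "(norm (x_seg s - x_seg t))\<^sup>2 \<le>
      norm (x_seg s) * norm ((1 - \<mu>) *\<^sub>R x_seg t + \<mu> *\<^sub>R x_seg e - x_seg t)
      + norm (x_seg t) * norm ((1 - \<kappa>) *\<^sub>R x_seg s + \<kappa> *\<^sub>R x_seg e' - x_seg s)"
    unfolding x_seg_def min_norm_def
    by (rule closest_point_zero_dist_sq_le[OF convex_polyhedron closed_polyhedron
          convex_polyhedron closed_polyhedron y[unfolded x_seg_def min_norm_def] y'[unfolded x_seg_def min_norm_def]])
  also have "\<dots> = norm (x_seg s) * (\<mu> * norm (x_seg e - x_seg t)) + norm (x_seg t) * (\<kappa> * norm (x_seg e' - x_seg s))"
  proof -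
    have "(1 - c) *\<^sub>R a + c *\<^sub>R d - a = c *\<^sub>R (d - a)" for c and a d :: 'a
      by (simp add: algebra_simps)
    then show ?thesis using \<mu> \<kappa> by simp
  qed
  also have "\<dots> \<le> R * (\<mu> * (2 * R)) + R * (\<kappa> * (2 * R))"
    using \<mu> \<kappa> t01 s01 e01 R R2 order.trans[OF norm_ge_zero R]
    by (intro add_mono mult_mono mult_left_mono) auto
  also have "\<dots> = 2 * R\<^sup>2 * (\<mu> + \<kappa>)"
    by (simp add: power2_eq_square algebra_simps)
  finally show ?thesis unfolding R_def .
qed

lemma x_seg_dist_sq_le_interior:
  assumes s: "s \<in> {0<..<1}" and t: "t \<in> {0<..<1}"
  shows "(norm (x_seg s - x_seg t))\<^sup>2 \<le> 2 * (norm (min_norm b0) + norm (min_norm b1))\<^sup>2 *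
    (\<bar>s - t\<bar> * (1 / s + 1 / t + 1 / (1 - s) + 1 / (1 - t)))"
proof -
  let ?C = "1 / s + 1 / t + 1 / (1 - s) + 1 / (1 - t)"
  have C: "\<bar>s - t\<bar> * (1 / s + 1 / (1 - t)) \<le> \<bar>s - t\<bar> * ?C"
    "\<bar>s - t\<bar> * (1 / t + 1 / (1 - s)) \<le> \<bar>s - t\<bar> * ?C"
    using s t by (intro mult_left_mono; simp)+
  obtain \<mu> \<kappa> e e' where "e \<in> {0, 1}" "e' \<in> {0, 1}" "\<mu> \<in> {0..1}" "\<kappa> \<in> {0..1}"
    "s = (1 - \<mu>) * t + \<mu> * e" "t = (1 - \<kappa>) * s + \<kappa> * e'" "\<mu> + \<kappa> \<le> \<bar>s - t\<bar> * ?C"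
  proof (cases "t \<le> s")
    case True
    show ?thesis
    proof (rule that[of 1 0 "(s - t) / (1 - t)" "(s - t) / s"])
      have "(s - t) / (1 - t) + (s - t) / s = \<bar>s - t\<bar> * (1 / s + 1 / (1 - t))"
        using True by (simp add: divide_inverse algebra_simps)
      then show "(s - t) / (1 - t) + (s - t) / s \<le> \<bar>s - t\<bar> * ?C"
        using C(1) by simp
      show "s = (1 - (s - t) / (1 - t)) * t + (s - t) / (1 - t) * 1"
        using t by (simp add: divide_simps) (simp add: algebra_simps)
      show "t = (1 - (s - t) / s) * s + (s - t) / s * 0"
        using s by (simp add: divide_simps)
    qed (use True s t in auto)
  next
    case False
    show ?thesis
    proof (rule that[of 0 1 "(t - s) / t" "(t - s) / (1 - s)"])
      have "(t - s) / t + (t - s) / (1 - s) = \<bar>s - t\<bar> * (1 / t + 1 / (1 - s))"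
        using False by (simp add: divide_inverse algebra_simps)
      then show "(t - s) / t + (t - s) / (1 - s) \<le> \<bar>s - t\<bar> * ?C"
        using C(2) by simp
      show "s = (1 - (t - s) / t) * t + (t - s) / t * 0"
        using t by (simp add: divide_simps)
      show "t = (1 - (t - s) / (1 - s)) * s + (t - s) / (1 - s) * 1"
        using s by (simp add: divide_simps) (simp add: algebra_simps)
    qed (use False s t in auto)
  qed
  then show ?thesis
    using x_seg_dist_sq_le[of t] t
    by (smt (verit) greaterThanLessThan_iff atLeastAtMost_iff mult_left_mono zero_le_power2)
qed

lemma x_seg_continuous:
  assumes t: "t \<in> {0<..<1}"
  shows "(x_seg \<longlongrightarrow> x_seg t) (at t within {0<..<1})"
proof -
  define B where "B s = 2 * (norm (min_norm b0) + norm (min_norm b1))\<^sup>2 *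
    (\<bar>s - t\<bar> * (1 / s + 1 / t + 1 / (1 - s) + 1 / (1 - t)))" for s
  have bound: "(norm (x_seg s - x_seg t))\<^sup>2 \<le> B s" if "s \<in> {0<..<1}" for s
    unfolding B_def using x_seg_dist_sq_le_interior[OF that t] .
  have "(B \<longlongrightarrow> B t) (at t within {0<..<1})"
    unfolding B_def using t by (intro tendsto_intros) auto
  then have "((\<lambda>s. sqrt (B s)) \<longlongrightarrow> 0) (at t within {0<..<1})"
    using tendsto_real_sqrt by (force simp: B_def)
  moreover have "eventually (\<lambda>s. norm (x_seg s - x_seg t) \<le> sqrt (B s)) (at t within {0<..<1})"
    unfolding eventually_at_filter by (intro always_eventually allI impI real_le_rsqrt bound) auto
  ultimately have "((\<lambda>s. x_seg s - x_seg t) \<longlongrightarrow> 0) (at t within {0<..<1})"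
    by (rule Lim_null_comparison[rotated])
  then show ?thesis by (simp add: LIM_zero_iff)
qed

lemma x_seg_piece_dist:
  assumes s: "s \<in> {0..1}" and t: "t \<in> {0..1}" and sub: "active (b_seg s) \<subseteq> active (b_seg t)"
  shows "norm (x_seg s - min_norm_eq (active (b_seg s)) (b_seg t)) \<le> L * (\<Sum>j\<in>J. \<bar>b1 j - b0 j\<bar>) * \<bar>s - t\<bar>"
proof -
  let ?E = "active (b_seg s)"
  have E: "?E \<subseteq> J" unfolding active_def by auto
  have "x_seg s \<in> equality_set ?E (b_seg s)"
    unfolding x_seg_def equality_set_def active_def by auto
  moreover have "x_seg t \<in> equality_set ?E (b_seg t)"
    using sub unfolding x_seg_def equality_set_def active_def by auto
  ultimately have "norm (min_norm_eq ?E (b_seg s) - min_norm_eq ?E (b_seg t)) \<le> L * (\<Sum>j\<in>J. \<bar>b_seg s j - b_seg t j\<bar>)"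
    using min_norm_eq_lip[OF E] by blast
  then show ?thesis
    using min_norm_eq_active[OF feasible_seg[OF s]] unfolding x_seg_def b_seg_dist
    by (simp add: algebra_simps)
qed

lemma eventually_active_subset:
  assumes t: "t \<in> {0<..<1}"
  shows "eventually (\<lambda>s. active (b_seg s) \<subseteq> active (b_seg t)) (at t within {0<..<1})"
proof -
  have "eventually (\<lambda>s. g j (x_seg s) < b_seg s j) (at t within {0<..<1})"
    if j: "j \<in> J - active (b_seg t)" for j
  proof -
    have "0 < b_seg t j - g j (x_seg t)"
      using j x_seg_in_polyhedron[of t] t unfolding polyhedron_def active_def x_seg_def by force
    moreover have "((\<lambda>s. b_seg s j - g j (x_seg s)) \<longlongrightarrow> b_seg t j - g j (x_seg t)) (at t within {0<..<1})"
      unfolding b_seg_def using j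
      by (intro tendsto_intros bounded_linear.tendsto[OF bounded_linear_g] x_seg_continuous[OF t]) auto
    ultimately have "eventually (\<lambda>s. 0 < b_seg s j - g j (x_seg s)) (at t within {0<..<1})"
      by (rule order_tendstoD(1)[rotated])
    then show ?thesis
      by (rule eventually_mono) simp
  qed
  then have "eventually (\<lambda>s. \<forall>j\<in>J - active (b_seg t). g j (x_seg s) < b_seg s j) (at t within {0<..<1})"
    using finite_J by (simp add: eventually_ball_finite_distrib)
  then show ?thesis
  proof (rule eventually_mono, intro subsetI)
    fix s j
    assume "\<forall>j\<in>J - active (b_seg t). g j (x_seg s) < b_seg s j" and "j \<in> active (b_seg s)"
    then show "j \<in> active (b_seg t)"
      unfolding active_def x_seg_def by force
  qed
qed

lemma eventually_active_ne:
  assumes t: "t \<in> {0<..<1}" and E: "E \<subseteq> active (b_seg t)"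
    and ne: "min_norm_eq E (b_seg t) \<noteq> x_seg t"
  shows "eventually (\<lambda>s. active (b_seg s) \<noteq> E) (at t within {0<..<1})"
proof -
  define K where "K = L * (\<Sum>j\<in>J. \<bar>b1 j - b0 j\<bar>)"
  define gap where "gap = norm (min_norm_eq E (b_seg t) - x_seg t)"
  have "((\<lambda>s. norm (x_seg s - x_seg t) + K * \<bar>s - t\<bar>) \<longlongrightarrow> norm (x_seg t - x_seg t) + K * \<bar>t - t\<bar>)
      (at t within {0<..<1})"
    by (intro tendsto_intros x_seg_continuous[OF t])
  moreover have "0 < gap" using ne by (simp add: gap_def)
  ultimately have "eventually (\<lambda>s. norm (x_seg s - x_seg t) + K * \<bar>s - t\<bar> < gap) (at t within {0<..<1})"
    by (auto dest: order_tendstoD(2))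
  moreover have "eventually (\<lambda>s. s \<in> {0<..<1}) (at t within {0<..<1})"
    by (simp add: eventually_at_filter)
  ultimately show ?thesis
  proof eventually_elim
    case (elim s)
    show "active (b_seg s) \<noteq> E"
    proof
      assume "active (b_seg s) = E"
      then have "norm (min_norm_eq E (b_seg t) - x_seg s) \<le> K * \<bar>s - t\<bar>"
        using x_seg_piece_dist[of s t] E elim t unfolding K_def by (auto simp: norm_minus_commute)
      then have "gap \<le> K * \<bar>s - t\<bar> + norm (x_seg s - x_seg t)"
        unfolding gap_def by (rule norm_diff_triangle_le) simp
      with elim show False by simp
    qed
  qed
qed

(* Near t, the active set at s is one of the finitely many subsets of the active set at t whose
   affine minimum-norm point at t is x_seg t; on each of these pieces the minimum-norm point moves
   Lipschitz continuously. *)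
lemma x_seg_local_lipschitz:
  assumes t: "t \<in> {0<..<1}"
  shows "eventually (\<lambda>s. norm (x_seg s - x_seg t) \<le> L * (\<Sum>j\<in>J. \<bar>b1 j - b0 j\<bar>) * \<bar>s - t\<bar>)
    (at t within {0<..<1})"
proof -
  let ?F = "at t within {0<..<1}" and ?A = "active (b_seg t)"
  have "finite (Pow ?A)"
    using finite_subset[OF _ finite_J] by (auto simp: active_def)
  then have "eventually (\<lambda>s. \<forall>E\<in>Pow ?A. min_norm_eq E (b_seg t) \<noteq> x_seg t \<longrightarrow> active (b_seg s) \<noteq> E) ?F"
    using eventually_active_ne[OF t] by (simp add: eventually_ball_finite_distrib)
  moreover note eventually_active_subset[OF t]
  moreover have "eventually (\<lambda>s. s \<in> {0<..<1}) ?F"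
    by (simp add: eventually_at_filter)
  ultimately show ?thesis
  proof eventually_elim
    case (elim s)
    then have "min_norm_eq (active (b_seg s)) (b_seg t) = x_seg t"
      by blast
    then show ?case
      using x_seg_piece_dist[of s t] elim t by auto
  qed
qed

lemma x_seg_lipschitz_open: "(L * (\<Sum>j\<in>J. \<bar>b1 j - b0 j\<bar>))-lipschitz_on {0<..<1} x_seg"
proof -
  define M where "M = L * (\<Sum>j\<in>J. \<bar>b1 j - b0 j\<bar>)"
  have M: "0 \<le> M" unfolding M_def using L_nonneg by (simp add: sum_nonneg)
  have lip: "M-lipschitz_on {c..d} x_seg" if cd: "0 < c" "d < 1" for c d
  proof (rule locally_lipschitz_imp_lipschitz[OF _ _ M])
    show "continuous_on {c..d} x_seg"
      unfolding continuous_on_def using cd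
      by (auto intro!: tendsto_within_subset[OF x_seg_continuous])
  next
    fix x y assume x: "x \<in> {c..<d}" and "x < y"
    obtain \<delta> where "\<delta> > 0" and \<delta>: "\<And>s. s \<in> {0<..<1} \<Longrightarrow> s \<noteq> x \<Longrightarrow> dist s x < \<delta> \<Longrightarrow>
        norm (x_seg s - x_seg x) \<le> M * \<bar>s - x\<bar>"
      using x_seg_local_lipschitz[of x] x cd unfolding eventually_at M_def by auto
    define m where "m = min (y - x) (min \<delta> (1 - x))"
    have "0 < m" "m \<le> y - x" "m \<le> \<delta>" "m \<le> 1 - x"
      using x cd \<open>x < y\<close> \<open>\<delta> > 0\<close> by (auto simp: m_def)
    then have "x + m / 2 \<in> {x<..y}" "x + m / 2 \<in> {0<..<1}" "dist (x + m / 2) x < \<delta>"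
      using x cd by (auto simp: dist_real_def)
    then show "\<exists>z\<in>{x<..y}. dist (x_seg z) (x_seg x) \<le> M * (z - x)"
      using \<delta>[of "x + m / 2"] \<open>0 < m\<close> by (intro bexI[of _ "x + m / 2"]) (auto simp: dist_norm)
  qed
  show ?thesis
    unfolding M_def[symmetric]
  proof (rule lipschitz_onI[OF _ M])
    fix s t :: real assume "s \<in> {0<..<1}" "t \<in> {0<..<1}"
    then show "dist (x_seg s) (x_seg t) \<le> M * dist s t"
      using lipschitz_onD[OF lip[of "min s t" "max s t"]] by auto
  qed
qed

(* The continuity estimate degenerates at the endpoints of the segment; there the limit is
   identified by closedness of the polyhedra and minimality of the norm instead. *)
lemma x_seg_endpoint_limit:
  assumes e: "e \<in> {0, 1}" and lim: "(x_seg \<longlongrightarrow> y) (at e within {0<..<1})"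
  shows "y = x_seg e"
proof -
  let ?F = "at e within {0<..<1}"
  have F: "?F \<noteq> bot"
    using e by (auto simp: at_within_eq_bot_iff)
  have ev: "eventually (\<lambda>s. s \<in> {0..1}) ?F"
    by (simp add: eventually_at_filter)
  have "y \<in> polyhedron (b_seg e)"
  proof (rule polyhedron_limit[OF F lim])
    show "((\<lambda>s. b_seg s j) \<longlongrightarrow> b_seg e j) ?F" for j
      unfolding b_seg_def by (intro tendsto_intros)
    show "eventually (\<lambda>s. x_seg s \<in> polyhedron (b_seg s)) ?F"
      using ev by (rule eventually_mono) (rule x_seg_in_polyhedron)
  qed
  moreover have "norm y \<le> norm (x_seg e)"
  proof -
    have "((\<lambda>s. norm (x_seg s)) \<longlongrightarrow> norm y) ?F"
      by (intro tendsto_intros lim)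
    moreover have "((\<lambda>s. (1 - s) * norm (min_norm b0) + s * norm (min_norm b1))
        \<longlongrightarrow> (1 - e) * norm (min_norm b0) + e * norm (min_norm b1)) ?F"
      by (intro tendsto_intros)
    moreover have "eventually (\<lambda>s. norm (x_seg s) \<le> (1 - s) * norm (min_norm b0) + s * norm (min_norm b1)) ?F"
      using ev by (rule eventually_mono) (rule norm_x_seg_le)
    ultimately have "norm y \<le> (1 - e) * norm (min_norm b0) + e * norm (min_norm b1)"
      using F by (simp add: tendsto_le)
    then show ?thesis
      using e by (auto simp: x_seg_def b_seg_0 b_seg_1)
  qed
  ultimately show ?thesis
    unfolding x_seg_def by (rule min_norm_unique)
qed

lemma min_norm_dist_le: "norm (min_norm b0 - min_norm b1) \<le> L * (\<Sum>j\<in>J. \<bar>b1 j - b0 j\<bar>)"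
proof -
  define M where "M = L * (\<Sum>j\<in>J. \<bar>b1 j - b0 j\<bar>)"
  obtain h where h: "M-lipschitz_on {0..1} h" "\<And>s. s \<in> {0<..<1} \<Longrightarrow> h s = x_seg s"
    using lipschitz_extend_closure[OF x_seg_lipschitz_open] unfolding M_def by auto
  have "h e = x_seg e" if e: "e \<in> {0, 1}" for e
  proof (rule x_seg_endpoint_limit[OF e])
    have "(h \<longlongrightarrow> h e) (at e within {0..1})"
      using lipschitz_on_continuous_on[OF h(1)] e by (auto simp: continuous_on_def)
    then have "(h \<longlongrightarrow> h e) (at e within {0<..<1})"
      by (rule tendsto_within_subset) auto
    then show "(x_seg \<longlongrightarrow> h e) (at e within {0<..<1})"
      by (rule tendsto_cong[THEN iffD1, rotated]) (auto simp: eventually_at_filter h(2))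
  qed
  then have "norm (min_norm b0 - min_norm b1) = dist (h 0) (h 1)"
    by (simp add: x_seg_def b_seg_0 b_seg_1 dist_norm)
  also have "\<dots> \<le> M * dist 0 (1::real)"
    by (rule lipschitz_onD[OF h(1)]) auto
  finally show ?thesis by (simp add: M_def)
qed

end

theorem min_norm_lipschitz:
  "\<exists>L. \<forall>b b'. polyhedron b \<noteq> {} \<longrightarrow> polyhedron b' \<noteq> {} \<longrightarrow>
     norm (min_norm b - min_norm b') \<le> L * (\<Sum>j\<in>J. \<bar>b j - b' j\<bar>)"
proof -
  obtain L where L: "0 \<le> L" "\<forall>E b b'. E \<subseteq> J \<longrightarrow> equality_set E b \<noteq> {} \<longrightarrow> equality_set E b' \<noteq> {} \<longrightarrow>
      norm (min_norm_eq E b - min_norm_eq E b') \<le> L * (\<Sum>j\<in>J. \<bar>b j - b' j\<bar>)"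
    using min_norm_eq_lipschitz by blast
  have "norm (min_norm b - min_norm b') \<le> L * (\<Sum>j\<in>J. \<bar>b j - b' j\<bar>)"
    if "polyhedron b \<noteq> {}" "polyhedron b' \<noteq> {}" for b b'
    using min_norm_dist_le[OF that L(1)] L(2) by (simp add: abs_minus_commute)
  then show ?thesis by blast
qed

end

section \<open>The MPC problem as a minimum-norm problem\<close>

lemma diagm_mult: "diagm v *v x = (\<chi> i. v $ i * x $ i)"
proof -
  have "(\<Sum>j\<in>UNIV. (if i = j then v $ i else 0) * x $ j) = (\<Sum>j\<in>UNIV. if j = i then v $ i * x $ j else 0)" for i
    by (rule sum.cong) auto
  then have "(\<Sum>j\<in>UNIV. (if i = j then v $ i else 0) * x $ j) = v $ i * x $ i" for i
    by simp
  then show ?thesis unfolding diagm_def matrix_vector_mult_def by (simp add: vec_eq_iff)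
qed

(* The boolean selects the upper (True) or the lower (False) bound. *)
datatype 'n qp_constraint = Input_bound 'n bool | Freq_bound nat 'n bool

definition signed :: "bool \<Rightarrow> real \<Rightarrow> real" where
  "signed s x = (if s then x else - x)"

lemma abs_le_iff_signed: "\<bar>x\<bar> \<le> c \<longleftrightarrow> signed True x \<le> c \<and> signed False x \<le> c"
  unfolding signed_def by (simp add: abs_le_iff)

lemma signed_le_abs: "signed s x \<le> \<bar>x\<bar>"
  unfolding signed_def by (cases s) auto

locale mpc_problem =
  fixes G :: "('n::finite, 'm::finite) grid" and P :: "'n mpcpar"
  assumes valid_grid: "valid_grid G" and valid_par: "valid_par G P"
begin

lemma M_pos: "0 < Mv G $ i"
  using valid_grid unfolding valid_grid_def by auto

lemma eps_pos: "0 < epsv P i"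
  using valid_par unfolding valid_par_def by auto

definition M_inv :: "real^'n^'n" where
  "M_inv = diagm (\<chi> i. 1 / Mv G $ i)"

lemma M_inv_M: "M_inv *v (diagm (Mv G) *v x) = x"
  unfolding M_inv_def diagm_mult using M_pos by (simp add: vec_eq_iff less_imp_neq[symmetric])

lemma M_M_inv: "diagm (Mv G) *v (M_inv *v x) = x"
  unfolding M_inv_def diagm_mult using M_pos by (simp add: vec_eq_iff less_imp_neq[symmetric])

definition net_step :: "(real^'m) \<times> (real^'n) \<Rightarrow> real^'n \<Rightarrow> (real^'m) \<times> (real^'n)" where
  "net_step x p = (fst x + Tstep P *\<^sub>R ((diagm (Ybv G) ** Dinc G) *v snd x),
     snd x + Tstep P *\<^sub>R (M_inv *v (- (diagm (Ev G) *v snd x) - (transpose (Dinc G) *v fst x) + p)))"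

primrec net_traj :: "(nat \<Rightarrow> real^'n) \<Rightarrow> (real^'m) \<times> (real^'n) \<Rightarrow> nat \<Rightarrow> (real^'m) \<times> (real^'n)" where
  "net_traj p x0 0 = x0"
| "net_traj p x0 (Suc k) = net_step (net_traj p x0 k) (p k)"

lemma linear_net_step: "linear (\<lambda>(x, p). net_step x p)"
  by (rule linearI) (auto simp: net_step_def algebra_simps split_beta simp del: transpose_matrix_vector)

lemma net_step_add: "net_step (x + y) (p + q) = net_step x p + net_step y q"
  using linear_add[OF linear_net_step, of "(x, p)" "(y, q)"] by simp

lemma net_step_scale: "net_step (c *\<^sub>R x) (c *\<^sub>R p) = c *\<^sub>R net_step x p"
  using linear_scale[OF linear_net_step, of c "(x, p)"] by simp

lemma net_traj_add: "net_traj (\<lambda>k. p k + q k) (x + y) k = net_traj p x k + net_traj q y k"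
  by (induction k) (simp_all add: net_step_add)

lemma net_traj_scale: "net_traj (\<lambda>k. c *\<^sub>R p k) (c *\<^sub>R x) k = c *\<^sub>R net_traj p x k"
  by (induction k) (simp_all add: net_step_scale)

lemma net_traj_diff: "net_traj p x k - net_traj q y k = net_traj (\<lambda>k. p k - q k) (x - y) k"
  using net_traj_add[of "\<lambda>k. p k - q k" q "x - y" y k] by simp

lemma net_traj_bound:
  "\<exists>C\<ge>1. \<forall>p x k. norm (net_traj p x k) \<le> C ^ k * (norm x + (\<Sum>l<k. norm (p l)))"
proof -
  obtain K where K: "0 \<le> K" "\<And>z. norm ((\<lambda>(x, p). net_step x p) z) \<le> norm z * K"
    using bounded_linear.nonneg_bounded[OF linear_conv_bounded_linear[THEN iffD1, OF linear_net_step]]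
    by blast
  define C where "C = K + 1"
  have step: "norm (net_step x p) \<le> C * (norm x + norm p)" for x p
  proof -
    have "norm (net_step x p) \<le> norm (x, p) * K" using K(2)[of "(x, p)"] by simp
    also have "\<dots> \<le> (norm x + norm p) * C"
      unfolding C_def using K(1) norm_Pair_le[of x p] by (intro mult_mono) auto
    finally show ?thesis by (simp add: mult.commute)
  qed
  have "norm (net_traj p x k) \<le> C ^ k * (norm x + (\<Sum>l<k. norm (p l)))" for p x k
  proof (induction k)
    case (Suc k)
    have "norm (p k) \<le> C ^ k * norm (p k)"
      using K(1) by (simp add: C_def mult_le_cancel_right1 one_le_power)
    with Suc.IH have "norm (net_traj p x k) + norm (p k) \<le> C ^ k * (norm x + (\<Sum>l<Suc k. norm (p l)))"
      by (simp add: algebra_simps)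
    then have "C * (norm (net_traj p x k) + norm (p k)) \<le> C ^ Suc k * (norm x + (\<Sum>l<Suc k. norm (p l)))"
      using K(1) by (simp add: C_def mult_left_mono)
    then show ?case
      using step[of "net_traj p x k" "p k"] by simp
  qed simp
  moreover have "1 \<le> C" using K(1) by (simp add: C_def)
  ultimately show ?thesis by blast
qed

definition input_resp :: "nat \<Rightarrow> real^'n \<Rightarrow> real^'n" where
  "input_resp k u = snd (net_traj (\<lambda>_. u) 0 (Suc k))"

lemma linear_input_resp: "linear (input_resp k)"
proof (rule linearI)
  show "input_resp k (u + v) = input_resp k u + input_resp k v" for u v
    using net_traj_add[of "\<lambda>_. u" "\<lambda>_. v" 0 0 "Suc k"] unfolding input_resp_def by simp
  show "input_resp k (c *\<^sub>R u) = c *\<^sub>R input_resp k u" for c u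
    using net_traj_scale[of c "\<lambda>_. u" 0 "Suc k"] unfolding input_resp_def by simp
qed

definition free_freq :: "(nat \<Rightarrow> real^'n) \<Rightarrow> real^'m \<Rightarrow> real^'n \<Rightarrow> nat \<Rightarrow> real^'n" where
  "free_freq Ph f0 w0 k = snd (net_traj Ph (f0, w0) (Suc k))"

lemma freq_superposition:
  "snd (net_traj (\<lambda>k. Ph k + u) (f0, w0) (Suc k)) = free_freq Ph f0 w0 k + input_resp k u"
  using net_traj_add[of Ph "\<lambda>_. u" "(f0, w0)" 0 "Suc k"]
  unfolding free_freq_def input_resp_def by simp

lemma qp_feas_net_traj:
  assumes F: "qp_feas G P Ph f0 w0 a0 fh wh ah u \<beta>"
  shows "k \<le> Nh P \<Longrightarrow> (fh k, wh k) = net_traj (\<lambda>k. Ph k + u) (f0, w0) k"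
proof (induction k)
  case 0
  then show ?case using F unfolding qp_feas_def by simp
next
  case (Suc k)
  then have k: "k < Nh P" and IH: "(fh k, wh k) = net_traj (\<lambda>k. Ph k + u) (f0, w0) k"
    by auto
  have "diagm (Mv G) *v wh (Suc k) = diagm (Mv G) *v wh k +
      Tstep P *\<^sub>R (- (diagm (Ev G) *v wh k) - (transpose (Dinc G) *v fh k) + Ph k + u)"
    using F k unfolding qp_feas_def by blast
  then have "wh (Suc k) = wh k + Tstep P *\<^sub>R (M_inv *v (- (diagm (Ev G) *v wh k) - (transpose (Dinc G) *v fh k) + (Ph k + u)))"
    using M_inv_M[of "wh (Suc k)"]
    by (simp add: matrix_vector_right_distrib matrix_vector_mult_scaleR M_inv_M add.assoc)
  moreover have "fh (Suc k) = fh k + Tstep P *\<^sub>R ((diagm (Ybv G) ** Dinc G) *v wh k)"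
    using F k unfolding qp_feas_def by blast
  moreover have "net_traj (\<lambda>k. Ph k + u) (f0, w0) (Suc k) = net_step (fh k, wh k) (Ph k + u)"
    using IH by simp
  ultimately show ?case
    unfolding net_step_def by (simp only: fst_conv snd_conv)
qed

definition weight :: "'n \<Rightarrow> real" where
  "weight i = (if i \<in> Iu G then sqrt (cw P i) else 1)"

lemma weight_pos: "0 < weight i"
  using valid_par unfolding weight_def valid_par_def by auto

lemma dw_pos: "0 < dw P"
  using valid_par unfolding valid_par_def by auto

definition scaled :: "real^'n \<Rightarrow> real \<Rightarrow> (real^'n) \<times> real" where
  "scaled u \<beta> = ((\<chi> i. weight i * u $ i), sqrt (dw P) * \<beta>)"

definition input_of :: "(real^'n) \<times> real \<Rightarrow> real^'n" where
  "input_of z = (\<chi> i. fst z $ i / weight i)"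

definition slack_of :: "(real^'n) \<times> real \<Rightarrow> real" where
  "slack_of z = snd z / sqrt (dw P)"

lemma input_of_scaled [simp]: "input_of (scaled u \<beta>) = u"
  unfolding input_of_def scaled_def using weight_pos by (simp add: vec_eq_iff less_imp_neq[symmetric])

lemma slack_of_scaled [simp]: "slack_of (scaled u \<beta>) = \<beta>"
  unfolding slack_of_def scaled_def using dw_pos by simp

lemma scaled_input_slack [simp]: "scaled (input_of z) (slack_of z) = z"
  unfolding input_of_def scaled_def slack_of_def using weight_pos dw_pos
  by (simp add: vec_eq_iff prod_eq_iff less_imp_neq[symmetric])

lemma linear_input_of: "linear input_of"
  by (rule linearI) (auto simp: input_of_def vec_eq_iff add_divide_distrib)

lemma linear_slack_of: "linear slack_of"
  by (rule linearI) (auto simp: slack_of_def add_divide_distrib)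

lemma norm_scaled_sq:
  assumes u: "u \<in> Aset G"
  shows "(norm (scaled u \<beta>))\<^sup>2 = qp_cost G P u \<beta>"
proof -
  have "(weight i * u $ i) * (weight i * u $ i) = (if i \<in> Iu G then cw P i * (u $ i)\<^sup>2 else 0)" for i
  proof (cases "i \<in> Iu G")
    case True
    then have "cw P i > 0" using valid_par unfolding valid_par_def by auto
    then show ?thesis using True by (simp add: weight_def power2_eq_square algebra_simps)
  next
    case False
    then show ?thesis using u unfolding Aset_def by simp
  qed
  then have "(norm (scaled u \<beta>))\<^sup>2 = (\<Sum>i\<in>UNIV. if i \<in> Iu G then cw P i * (u $ i)\<^sup>2 else 0) + dw P * \<beta>\<^sup>2"
    unfolding power2_norm_eq_inner scaled_def using dw_pos
    by (simp add: inner_vec_def power2_eq_square algebra_simps)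
  then show ?thesis
    unfolding qp_cost_def by (simp add: sum.If_cases)
qed

(* Input bounds are imposed at every node: for i outside I_u they read |u_i| <= 0 because
   a_0 is in A, and so they encode the constraint that u is in A. *)
definition constraints :: "'n qp_constraint set" where
  "constraints = range (case_prod Input_bound) \<union> (\<lambda>(k, i, s). Freq_bound k i s) ` ({..<Nh P} \<times> Iw G \<times> UNIV)"

lemma Input_bound_mem [simp]: "Input_bound i s \<in> constraints"
  unfolding constraints_def by auto

lemma Freq_bound_mem [simp]: "Freq_bound k i s \<in> constraints \<longleftrightarrow> k < Nh P \<and> i \<in> Iw G"
  unfolding constraints_def by (auto intro: image_eqI[where x = "(k, i, s)"])

lemma finite_constraints: "finite constraints"
  unfolding constraints_def by auto

definition qp_lhs :: "'n qp_constraint \<Rightarrow> (real^'n) \<times> real \<Rightarrow> real" where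
  "qp_lhs j z = (case j of
      Input_bound i s \<Rightarrow> signed s (input_of z $ i)
    | Freq_bound k i s \<Rightarrow> signed s (input_resp k (input_of z) $ i) - slack_of z)"

definition qp_rhs :: "(nat \<Rightarrow> real^'n) \<Rightarrow> real^'m \<Rightarrow> real^'n \<Rightarrow> real^'n \<Rightarrow> 'n qp_constraint \<Rightarrow> real" where
  "qp_rhs Ph f0 w0 a0 j = (case j of
      Input_bound i s \<Rightarrow> epsv P i * \<bar>a0 $ i\<bar>
    | Freq_bound k i s \<Rightarrow> signed s ((if s then whi P i else wlo P i) - free_freq Ph f0 w0 k $ i))"

lemma linear_qp_lhs: "linear (qp_lhs j)"
  by (rule linearI) (auto simp: qp_lhs_def signed_def linear_add[OF linear_input_of] linear_scale[OF linear_input_of]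
      linear_add[OF linear_input_resp] linear_scale[OF linear_input_resp]
      linear_add[OF linear_slack_of] linear_scale[OF linear_slack_of] algebra_simps split: qp_constraint.split)

sublocale qp: linear_constraints constraints qp_lhs
  by (rule linear_constraints.intro[OF finite_constraints linear_qp_lhs])

lemma freq_bound_iff_signed:
  "(lo - \<beta> \<le> w \<and> w \<le> hi + \<beta>) \<longleftrightarrow> (\<forall>s. signed s w - \<beta> \<le> signed s (if s then hi else lo))"
  unfolding signed_def by (metis (full_types) add.commute diff_le_eq le_diff_eq minus_diff_eq neg_le_iff_le)

lemma qp_feas_input_bound:
  assumes F: "qp_feas G P Ph f0 w0 a0 fh wh ah u \<beta>"
  shows "\<bar>u $ i\<bar> \<le> epsv P i * \<bar>a0 $ i\<bar>"
proof (cases "i \<in> Iu G")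
  case True
  then show ?thesis using F unfolding qp_feas_def by blast
next
  case False
  then have "u $ i = 0" using F unfolding qp_feas_def Aset_def by blast
  then show ?thesis using eps_pos[of i] by simp
qed

lemma scaled_in_polyhedron:
  assumes F: "qp_feas G P Ph f0 w0 a0 fh wh ah u \<beta>"
  shows "scaled u \<beta> \<in> qp.polyhedron (qp_rhs Ph f0 w0 a0)"
  unfolding qp.polyhedron_def
proof (intro CollectI ballI)
  fix j assume j: "j \<in> constraints"
  show "qp_lhs j (scaled u \<beta>) \<le> qp_rhs Ph f0 w0 a0 j"
  proof (cases j)
    case (Input_bound i s)
    then show ?thesis
      using qp_feas_input_bound[OF F, of i] signed_le_abs[of s "u $ i"]
      by (simp add: qp_lhs_def qp_rhs_def)
  next
    case (Freq_bound k i s)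
    then have ki: "k < Nh P" "i \<in> Iw G" using j by auto
    have "(fh (Suc k), wh (Suc k)) = net_traj (\<lambda>k. Ph k + u) (f0, w0) (Suc k)"
      using qp_feas_net_traj[OF F, of "Suc k"] ki by simp
    then have "wh (Suc k) = free_freq Ph f0 w0 k + input_resp k u"
      using freq_superposition by (metis snd_conv)
    moreover have "wlo P i - \<beta> \<le> wh (Suc k) $ i \<and> wh (Suc k) $ i \<le> whi P i + \<beta>"
      using F ki unfolding qp_feas_def by blast
    ultimately have "signed s (free_freq Ph f0 w0 k $ i + input_resp k u $ i) - \<beta> \<le> signed s (if s then whi P i else wlo P i)"
      unfolding freq_bound_iff_signed by simp
    then show ?thesis
      using Freq_bound by (cases s) (simp_all add: qp_lhs_def qp_rhs_def signed_def)
  qed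
qed

(* The predicted filter state enters neither cost nor constraints; it only completes a feasible
   point of the problem. *)
primrec alpha_traj :: "real^'n \<Rightarrow> (nat \<Rightarrow> real^'n) \<Rightarrow> real^'n \<Rightarrow> nat \<Rightarrow> real^'n" where
  "alpha_traj a0 w u 0 = a0"
| "alpha_traj a0 w u (Suc k) = (\<chi> i. if i \<in> Iu G
      then alpha_traj a0 w u k $ i + Tstep P * (- alpha_traj a0 w u k $ i / Tf P i - w k $ i + u $ i) else 0)"

lemma polyhedron_input_bound:
  assumes z: "z \<in> qp.polyhedron (qp_rhs Ph f0 w0 a0)"
  shows "\<bar>input_of z $ i\<bar> \<le> epsv P i * \<bar>a0 $ i\<bar>"
proof -
  have "qp_lhs (Input_bound i s) z \<le> qp_rhs Ph f0 w0 a0 (Input_bound i s)" for s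
    using z unfolding qp.polyhedron_def by simp
  then show ?thesis
    unfolding abs_le_iff_signed by (simp add: qp_lhs_def qp_rhs_def)
qed

lemma polyhedron_input_in_Aset:
  assumes a0: "a0 \<in> Aset G" and z: "z \<in> qp.polyhedron (qp_rhs Ph f0 w0 a0)"
  shows "input_of z \<in> Aset G"
  unfolding Aset_def
proof (intro CollectI allI impI)
  fix i assume "i \<notin> Iu G"
  then have "a0 $ i = 0" using a0 unfolding Aset_def by blast
  then show "input_of z $ i = 0" using polyhedron_input_bound[OF z, of i] by simp
qed

lemma polyhedron_freq_bound:
  assumes z: "z \<in> qp.polyhedron (qp_rhs Ph f0 w0 a0)" and k: "k < Nh P" and i: "i \<in> Iw G"
  defines "w \<equiv> snd (net_traj (\<lambda>k. Ph k + input_of z) (f0, w0) (Suc k))"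
  shows "wlo P i - slack_of z \<le> w $ i \<and> w $ i \<le> whi P i + slack_of z"
  unfolding freq_bound_iff_signed w_def freq_superposition
proof
  fix s
  have "qp_lhs (Freq_bound k i s) z \<le> qp_rhs Ph f0 w0 a0 (Freq_bound k i s)"
    using z k i unfolding qp.polyhedron_def by simp
  then show "signed s ((free_freq Ph f0 w0 k + input_resp k (input_of z)) $ i) - slack_of z
      \<le> signed s (if s then whi P i else wlo P i)"
    by (cases s) (simp_all add: qp_lhs_def qp_rhs_def signed_def)
qed

lemma polyhedron_feasible:
  assumes a0: "a0 \<in> Aset G" and z: "z \<in> qp.polyhedron (qp_rhs Ph f0 w0 a0)"
  defines "x \<equiv> net_traj (\<lambda>k. Ph k + input_of z) (f0, w0)"
  shows "qp_feas G P Ph f0 w0 a0 (\<lambda>k. fst (x k)) (\<lambda>k. snd (x k))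
    (alpha_traj a0 (\<lambda>k. snd (x k)) (input_of z)) (input_of z) (slack_of z)"
proof -
  let ?u = "input_of z" and ?\<alpha> = "alpha_traj a0 (\<lambda>k. snd (x k)) (input_of z)"
  have alpha_out: "?\<alpha> k $ i = 0" if "i \<notin> Iu G" for k i
    using a0 that unfolding Aset_def by (cases k) auto
  have alpha_step: "\<forall>i\<in>Iu G. ?\<alpha> (Suc k) $ i = ?\<alpha> k $ i
      + Tstep P * (- ?\<alpha> k $ i / Tf P i - snd (x k) $ i + ?u $ i)" for k
    by simp
  have w_step: "diagm (Mv G) *v snd (x (Suc k)) = diagm (Mv G) *v snd (x k) + Tstep P *\<^sub>R
      (- (diagm (Ev G) *v snd (x k)) - (transpose (Dinc G) *v fst (x k)) + Ph k + ?u)" for k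
    by (simp add: x_def net_step_def matrix_vector_right_distrib matrix_vector_mult_scaleR M_M_inv add.assoc
        del: transpose_matrix_vector)
  have f_step: "fst (x (Suc k)) = fst (x k) + Tstep P *\<^sub>R ((diagm (Ybv G) ** Dinc G) *v snd (x k))" for k
    by (simp add: x_def net_step_def)
  have freq: "wlo P i - slack_of z \<le> snd (x (Suc k)) $ i \<and> snd (x (Suc k)) $ i \<le> whi P i + slack_of z"
    if "k < Nh P" "i \<in> Iw G" for k i
    unfolding x_def by (rule polyhedron_freq_bound[OF z that])
  have "fst (x 0) = f0" "snd (x 0) = w0" "?\<alpha> 0 = a0"
    by (simp_all add: x_def)
  then show ?thesis
    unfolding qp_feas_def
    using polyhedron_input_in_Aset[OF a0 z] polyhedron_input_bound[OF z] freq alpha_out alpha_step w_step f_step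
    by (intro conjI) blast+
qed

lemma polyhedron_nonempty: "qp.polyhedron (qp_rhs Ph f0 w0 a0) \<noteq> {}"
proof -
  define \<beta> where "\<beta> = (\<Sum>j\<in>constraints. \<bar>qp_rhs Ph f0 w0 a0 j\<bar>)"
  have "\<bar>qp_rhs Ph f0 w0 a0 j\<bar> \<le> \<beta>" if "j \<in> constraints" for j
    unfolding \<beta>_def using finite_constraints that by (intro member_le_sum) auto
  then have "scaled 0 \<beta> \<in> qp.polyhedron (qp_rhs Ph f0 w0 a0)"
    unfolding qp.polyhedron_def
  proof (intro CollectI ballI)
    fix j assume j: "j \<in> constraints" and bound: "\<And>j. j \<in> constraints \<Longrightarrow> \<bar>qp_rhs Ph f0 w0 a0 j\<bar> \<le> \<beta>"
    show "qp_lhs j (scaled 0 \<beta>) \<le> qp_rhs Ph f0 w0 a0 j"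
    proof (cases j)
      case (Input_bound i s)
      then show ?thesis using eps_pos[of i] by (simp add: qp_lhs_def qp_rhs_def signed_def)
    next
      case (Freq_bound k i s)
      then show ?thesis
        using bound[OF j] linear_0[OF linear_input_resp] by (cases s) (simp_all add: qp_lhs_def signed_def abs_le_iff)
    qed
  qed
  then show ?thesis by blast
qed

lemma qp_cost_eq_norm_sq:
  "qp_feas G P Ph f0 w0 a0 fh wh ah u \<beta> \<Longrightarrow> qp_cost G P u \<beta> = (norm (scaled u \<beta>))\<^sup>2"
  unfolding qp_feas_def by (simp add: norm_scaled_sq)

lemma uopt_eq_min_norm:
  assumes a0: "a0 \<in> Aset G"
  shows "uopt G P Ph f0 w0 a0 = input_of (qp.min_norm (qp_rhs Ph f0 w0 a0))"
proof -
  let ?b = "qp_rhs Ph f0 w0 a0"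
  let ?z = "qp.min_norm ?b"
  have z: "?z \<in> qp.polyhedron ?b"
    using qp.min_norm_in_polyhedron[OF polyhedron_nonempty] .
  obtain fh wh ah where F: "qp_feas G P Ph f0 w0 a0 fh wh ah (input_of ?z) (slack_of ?z)"
    using polyhedron_feasible[OF a0 z] by blast
  have cost_z: "qp_cost G P (input_of ?z) (slack_of ?z) = (norm ?z)\<^sup>2"
    using qp_cost_eq_norm_sq[OF F] by simp
  have cost_le: "(norm ?z)\<^sup>2 \<le> qp_cost G P u \<beta>" if F': "qp_feas G P Ph f0 w0 a0 fh wh ah u \<beta>"
    for fh wh ah u \<beta>
    using qp.norm_min_norm_le[OF scaled_in_polyhedron[OF F']] qp_cost_eq_norm_sq[OF F']
    by (simp add: power_mono)
  show ?thesis
    unfolding uopt_def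
  proof (rule the_equality)
    have "qp_opt G P Ph f0 w0 a0 fh wh ah (input_of ?z) (slack_of ?z)"
      unfolding qp_opt_def using F cost_z cost_le by simp
    then show "\<exists>fh wh ah \<beta>. qp_opt G P Ph f0 w0 a0 fh wh ah (input_of ?z) \<beta>"
      by blast
  next
    fix u assume "\<exists>fh wh ah \<beta>. qp_opt G P Ph f0 w0 a0 fh wh ah u \<beta>"
    then obtain fh wh ah \<beta> where F': "qp_feas G P Ph f0 w0 a0 fh wh ah u \<beta>"
      and "qp_cost G P u \<beta> \<le> qp_cost G P (input_of ?z) (slack_of ?z)"
      using F unfolding qp_opt_def by blast
    then have "norm (scaled u \<beta>) \<le> norm ?z"
      using cost_z qp_cost_eq_norm_sq[OF F'] by (simp add: power2_le_iff_abs_le)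
    then have "scaled u \<beta> = ?z"
      by (rule qp.min_norm_unique[OF scaled_in_polyhedron[OF F']])
    then show "u = input_of ?z"
      by (metis input_of_scaled)
  qed
qed

lemma abs_uopt_le:
  assumes a0: "a0 \<in> Aset G"
  shows "\<bar>uopt G P Ph f0 w0 a0 $ i\<bar> \<le> epsv P i * \<bar>a0 $ i\<bar>"
  unfolding uopt_eq_min_norm[OF a0]
  by (rule polyhedron_input_bound[OF qp.min_norm_in_polyhedron[OF polyhedron_nonempty]])

lemma free_freq_lipschitz:
  "\<exists>C\<ge>0. \<forall>Ph1 Ph2 f1 f2 w1 w2 k. k < Nh P \<longrightarrow>
     norm (free_freq Ph1 f1 w1 k - free_freq Ph2 f2 w2 k)
       \<le> C * ((\<Sum>k<Nh P. norm (Ph1 k - Ph2 k)) + norm (f1 - f2) + norm (w1 - w2))"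
proof -
  obtain C where C: "1 \<le> C" "\<And>p x k. norm (net_traj p x k) \<le> C ^ k * (norm x + (\<Sum>l<k. norm (p l)))"
    using net_traj_bound by blast
  have "norm (free_freq Ph1 f1 w1 k - free_freq Ph2 f2 w2 k)
       \<le> C ^ Nh P * ((\<Sum>k<Nh P. norm (Ph1 k - Ph2 k)) + norm (f1 - f2) + norm (w1 - w2))"
    if k: "k < Nh P" for Ph1 Ph2 f1 f2 w1 w2 k
  proof -
    let ?x = "net_traj (\<lambda>k. Ph1 k - Ph2 k) (f1 - f2, w1 - w2) (Suc k)"
    have "norm (free_freq Ph1 f1 w1 k - free_freq Ph2 f2 w2 k) = norm (snd ?x)"
      unfolding free_freq_def snd_diff[symmetric] net_traj_diff by simp
    also have "\<dots> \<le> norm ?x"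
      using norm_snd_le[of "snd ?x" "fst ?x"] by simp
    also have "\<dots> \<le> C ^ Suc k * (norm (f1 - f2, w1 - w2) + (\<Sum>l<Suc k. norm (Ph1 l - Ph2 l)))"
      by (rule C(2))
    also have "\<dots> \<le> C ^ Nh P * ((\<Sum>k<Nh P. norm (Ph1 k - Ph2 k)) + norm (f1 - f2) + norm (w1 - w2))"
    proof (rule mult_mono)
      show "C ^ Suc k \<le> C ^ Nh P"
        using C(1) k by (intro power_increasing) auto
      have "(\<Sum>l<Suc k. norm (Ph1 l - Ph2 l)) \<le> (\<Sum>l<Nh P. norm (Ph1 l - Ph2 l))"
        using k by (intro sum_mono2) auto
      then show "norm (f1 - f2, w1 - w2) + (\<Sum>l<Suc k. norm (Ph1 l - Ph2 l))
          \<le> (\<Sum>k<Nh P. norm (Ph1 k - Ph2 k)) + norm (f1 - f2) + norm (w1 - w2)"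
        using norm_Pair_le[of "f1 - f2" "w1 - w2"] by linarith
    qed (use C(1) in \<open>auto intro!: add_nonneg_nonneg sum_nonneg\<close>)
    finally show ?thesis .
  qed
  then show ?thesis
    using C(1) by (intro exI[of _ "C ^ Nh P"]) auto
qed

lemma qp_rhs_Input_bound_diff:
  "\<bar>qp_rhs Ph1 f1 w1 a1 (Input_bound i s) - qp_rhs Ph2 f2 w2 a2 (Input_bound i s)\<bar> \<le> epsv P i * norm (a1 - a2)"
proof -
  have "\<bar>\<bar>a1 $ i\<bar> - \<bar>a2 $ i\<bar>\<bar> \<le> \<bar>(a1 - a2) $ i\<bar>"
    using abs_triangle_ineq3 by simp
  also have "\<dots> \<le> norm (a1 - a2)"
    by (rule component_le_norm_cart)
  finally show ?thesis
    using eps_pos[of i] by (simp add: qp_rhs_def right_diff_distrib[symmetric] abs_mult)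
qed

lemma qp_rhs_Freq_bound_diff:
  "\<bar>qp_rhs Ph1 f1 w1 a1 (Freq_bound k i s) - qp_rhs Ph2 f2 w2 a2 (Freq_bound k i s)\<bar>
    \<le> norm (free_freq Ph1 f1 w1 k - free_freq Ph2 f2 w2 k)"
proof -
  have "\<bar>qp_rhs Ph1 f1 w1 a1 (Freq_bound k i s) - qp_rhs Ph2 f2 w2 a2 (Freq_bound k i s)\<bar>
      = \<bar>(free_freq Ph1 f1 w1 k - free_freq Ph2 f2 w2 k) $ i\<bar>"
    by (cases s) (simp_all add: qp_rhs_def signed_def)
  then show ?thesis
    using component_le_norm_cart[of "free_freq Ph1 f1 w1 k - free_freq Ph2 f2 w2 k" i] by simp
qed

lemma qp_rhs_lipschitz:
  "\<exists>M\<ge>0. \<forall>Ph1 Ph2 f1 f2 w1 w2 a1 a2. \<forall>j\<in>constraints.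
     \<bar>qp_rhs Ph1 f1 w1 a1 j - qp_rhs Ph2 f2 w2 a2 j\<bar>
       \<le> M * ((\<Sum>k<Nh P. norm (Ph1 k - Ph2 k)) + norm (f1 - f2) + norm (w1 - w2) + norm (a1 - a2))"
proof -
  obtain C where C: "0 \<le> C" "\<And>Ph1 Ph2 f1 f2 w1 w2 k. k < Nh P \<Longrightarrow>
     norm (free_freq Ph1 f1 w1 k - free_freq Ph2 f2 w2 k)
       \<le> C * ((\<Sum>k<Nh P. norm (Ph1 k - Ph2 k)) + norm (f1 - f2) + norm (w1 - w2))"
    using free_freq_lipschitz by blast
  define M where "M = C + (\<Sum>i\<in>UNIV. epsv P i)"
  have "epsv P i \<le> (\<Sum>i\<in>UNIV. epsv P i)" for i
    using eps_pos by (intro member_le_sum) (auto intro: less_imp_le)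
  then have M: "C \<le> M" "epsv P i \<le> M" for i
    unfolding M_def using C(1) eps_pos by (auto intro: sum_nonneg less_imp_le add_increasing)
  have "\<bar>qp_rhs Ph1 f1 w1 a1 j - qp_rhs Ph2 f2 w2 a2 j\<bar>
      \<le> M * ((\<Sum>k<Nh P. norm (Ph1 k - Ph2 k)) + norm (f1 - f2) + norm (w1 - w2) + norm (a1 - a2))"
    if j: "j \<in> constraints" for Ph1 Ph2 f1 f2 w1 w2 a1 a2 j
  proof -
    define D where "D = (\<Sum>k<Nh P. norm (Ph1 k - Ph2 k)) + norm (f1 - f2) + norm (w1 - w2)"
    have "0 \<le> D" unfolding D_def by (simp add: sum_nonneg)
    have "\<bar>qp_rhs Ph1 f1 w1 a1 j - qp_rhs Ph2 f2 w2 a2 j\<bar> \<le> M * (D + norm (a1 - a2))"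
    proof (cases j)
      case (Input_bound i s)
      then show ?thesis
        using qp_rhs_Input_bound_diff[of Ph1 f1 w1 a1 i s Ph2 f2 w2 a2] \<open>0 \<le> D\<close> M(2)[of i] eps_pos[of i]
        by (smt (verit) mult_mono norm_ge_zero)
    next
      case (Freq_bound k i s)
      then show ?thesis
        using qp_rhs_Freq_bound_diff[of Ph1 f1 w1 a1 k i s Ph2 f2 w2 a2] C(2)[of k Ph1 f1 w1 Ph2 f2 w2] j
          \<open>0 \<le> D\<close> C(1) M(1) unfolding D_def
        by (smt (verit) Freq_bound_mem mult_mono norm_ge_zero)
    qed
    then show ?thesis by (simp only: D_def)
  qed
  moreover have "0 \<le> M" using C(1) M(1) by linarith
  ultimately show ?thesis by blast
qed

lemma uopt_lipschitz:
  "\<exists>L. \<forall>Ph1 Ph2 f1 f2 w1 w2 a1 a2. a1 \<in> Aset G \<longrightarrow> a2 \<in> Aset G \<longrightarrow>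
      norm (uopt G P Ph1 f1 w1 a1 - uopt G P Ph2 f2 w2 a2)
        \<le> L * ((\<Sum>k<Nh P. norm (Ph1 k - Ph2 k)) + norm (f1 - f2) + norm (w1 - w2) + norm (a1 - a2))"
proof -
  obtain M where M: "0 \<le> M" "\<And>Ph1 Ph2 f1 f2 w1 w2 a1 a2 j. j \<in> constraints \<Longrightarrow>
     \<bar>qp_rhs Ph1 f1 w1 a1 j - qp_rhs Ph2 f2 w2 a2 j\<bar>
       \<le> M * ((\<Sum>k<Nh P. norm (Ph1 k - Ph2 k)) + norm (f1 - f2) + norm (w1 - w2) + norm (a1 - a2))"
    using qp_rhs_lipschitz by blast
  obtain Lz where Lz: "\<And>b b'. qp.polyhedron b \<noteq> {} \<Longrightarrow> qp.polyhedron b' \<noteq> {} \<Longrightarrow>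
      norm (qp.min_norm b - qp.min_norm b') \<le> Lz * (\<Sum>j\<in>constraints. \<bar>b j - b' j\<bar>)"
    using qp.min_norm_lipschitz by blast
  obtain K where K: "0 \<le> K" "\<And>z. norm (input_of z) \<le> norm z * K"
    using bounded_linear.nonneg_bounded[OF linear_conv_bounded_linear[THEN iffD1, OF linear_input_of]] by blast
  have "norm (uopt G P Ph1 f1 w1 a1 - uopt G P Ph2 f2 w2 a2)
        \<le> K * \<bar>Lz\<bar> * (real (card constraints) * M) * ((\<Sum>k<Nh P. norm (Ph1 k - Ph2 k)) + norm (f1 - f2) + norm (w1 - w2) + norm (a1 - a2))"
    if a: "a1 \<in> Aset G" "a2 \<in> Aset G" for Ph1 Ph2 f1 f2 w1 w2 a1 a2
  proof -
    define Q where "Q = (\<Sum>k<Nh P. norm (Ph1 k - Ph2 k)) + norm (f1 - f2) + norm (w1 - w2) + norm (a1 - a2)"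
    let ?b1 = "qp_rhs Ph1 f1 w1 a1" and ?b2 = "qp_rhs Ph2 f2 w2 a2"
    have "norm (uopt G P Ph1 f1 w1 a1 - uopt G P Ph2 f2 w2 a2) = norm (input_of (qp.min_norm ?b1 - qp.min_norm ?b2))"
      unfolding uopt_eq_min_norm[OF a(1)] uopt_eq_min_norm[OF a(2)] linear_diff[OF linear_input_of] ..
    also have "\<dots> \<le> norm (qp.min_norm ?b1 - qp.min_norm ?b2) * K"
      by (rule K(2))
    also have "\<dots> \<le> (\<bar>Lz\<bar> * (\<Sum>j\<in>constraints. \<bar>?b1 j - ?b2 j\<bar>)) * K"
    proof (rule mult_right_mono[OF _ K(1)])
      have "Lz * (\<Sum>j\<in>constraints. \<bar>?b1 j - ?b2 j\<bar>) \<le> \<bar>Lz\<bar> * (\<Sum>j\<in>constraints. \<bar>?b1 j - ?b2 j\<bar>)"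
        by (intro mult_right_mono) (auto intro: sum_nonneg)
      then show "norm (qp.min_norm ?b1 - qp.min_norm ?b2) \<le> \<bar>Lz\<bar> * (\<Sum>j\<in>constraints. \<bar>?b1 j - ?b2 j\<bar>)"
        using Lz[OF polyhedron_nonempty polyhedron_nonempty] by (rule order.trans[rotated])
    qed
    also have "\<dots> \<le> (\<bar>Lz\<bar> * (real (card constraints) * (M * Q))) * K"
    proof -
      have "(\<Sum>j\<in>constraints. \<bar>?b1 j - ?b2 j\<bar>) \<le> real (card constraints) * (M * Q)"
        using M(2) unfolding Q_def by (intro sum_bounded_above) auto
      then show ?thesis using K(1) by (intro mult_right_mono mult_left_mono) auto
    qed
    finally show ?thesis by (simp add: Q_def algebra_simps)
  qed
  then show ?thesis by blast
qed

end

lemma seg_at_sample: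
  assumes "strict_mono \<Delta>"
  shows "seg \<Delta> (\<Delta> j) = j"
  unfolding seg_def
proof (rule the_equality)
  show "\<Delta> j \<le> \<Delta> j \<and> \<Delta> j < \<Delta> (Suc j)"
    using strict_monoD[OF assms] by simp
next
  fix j' assume "\<Delta> j' \<le> \<Delta> j \<and> \<Delta> j < \<Delta> (Suc j')"
  then have "j' \<le> j" "j < Suc j'"
    using strict_mono_less_eq[OF assms] strict_mono_less[OF assms] by auto
  then show "j' = j" by simp
qed

lemma sat_eq_self: "\<bar>a\<bar> \<le> b \<Longrightarrow> sat a b = a"
  unfolding sat_def by auto

lemma mult_sat_le:
  fixes e x a :: real
  assumes "0 \<le> e"
  shows "x * sat a (e * \<bar>x\<bar>) \<le> e * x\<^sup>2"
proof -
  have "\<bar>sat a (e * \<bar>x\<bar>)\<bar> \<le> e * \<bar>x\<bar>"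
    using assms unfolding sat_def by (simp add: abs_le_iff)
  then have "\<bar>x\<bar> * \<bar>sat a (e * \<bar>x\<bar>)\<bar> \<le> \<bar>x\<bar> * (e * \<bar>x\<bar>)"
    by (rule mult_left_mono) simp
  then show ?thesis
    by (smt (verit) abs_mult abs_mult_self_eq abs_le_iff power2_eq_square mult.left_commute)
qed

context mpc_problem
begin

lemma uhat_mpc_at_sample:
  assumes "\<Delta> 0 = 0" "strict_mono \<Delta>" and \<alpha>: "\<And>t. 0 \<le> t \<Longrightarrow> \<alpha> t \<in> Aset G"
  shows "uhat_mpc G P \<Delta> pf f \<omega> \<alpha> (\<Delta> j) = uopt G P (Pfcst P \<Delta> pf j) (f (\<Delta> j)) (\<omega> (\<Delta> j)) (\<alpha> (\<Delta> j))"
proof -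
  have "0 \<le> \<Delta> j"
    using strict_mono_less_eq[OF assms(2), of 0 j] assms(1) by simp
  then show ?thesis
    using abs_uopt_le[OF \<alpha>] sat_eq_self
    unfolding uhat_mpc_def u_mpc_def seg_at_sample[OF assms(2)] by (simp add: vec_eq_iff)
qed

end

theorem lemma4p2:
  fixes G :: "('n::finite, 'm::finite) grid" and P :: "'n mpcpar"
    and \<Delta> :: "nat \<Rightarrow> real" and pf :: "nat \<Rightarrow> real \<Rightarrow> real^'n" and p :: "real \<Rightarrow> real^'n"
    and f :: "real \<Rightarrow> real^'m" and \<omega> :: "real \<Rightarrow> real^'n" and \<alpha> :: "real \<Rightarrow> real^'n"
  assumes "valid_grid G" and "valid_par G P"
    and "\<Delta> 0 = 0" and "strict_mono \<Delta>"
    and "closed_loop G P \<Delta> pf p f \<omega> \<alpha>"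
  shows "(\<forall>j. uhat_mpc G P \<Delta> pf f \<omega> \<alpha> (\<Delta> j) =
              uopt G P (Pfcst P \<Delta> pf j) (f (\<Delta> j)) (\<omega> (\<Delta> j)) (\<alpha> (\<Delta> j)))
       \<and> (\<exists>L. \<forall>Ph1 Ph2 f1 f2 w1 w2 a1 a2. a1 \<in> Aset G \<longrightarrow> a2 \<in> Aset G \<longrightarrow>
              norm (uopt G P Ph1 f1 w1 a1 - uopt G P Ph2 f2 w2 a2)
                \<le> L * ((\<Sum>k<Nh P. norm (Ph1 k - Ph2 k)) + norm (f1 - f2) + norm (w1 - w2) + norm (a1 - a2)))
       \<and> (\<forall>t\<ge>0. \<forall>i. \<alpha> t $ i * uhat_mpc G P \<Delta> pf f \<omega> \<alpha> t $ i \<le> epsv P i * (\<alpha> t $ i)\<^sup>2)"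
proof -
  interpret mpc_problem G P
    using assms(1,2) by (rule mpc_problem.intro)
  have "\<alpha> t \<in> Aset G" if "0 \<le> t" for t
    using assms(5) that unfolding closed_loop_def by blast
  then show ?thesis
    using uhat_mpc_at_sample[OF assms(3,4)] uopt_lipschitz mult_sat_le[OF less_imp_le[OF eps_pos]]
    unfolding uhat_mpc_def by simp
qed

end
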